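(* Let $w \in S_n$. Suppose that $\mathfrak{S}_w$ is a single standard elementary monomial $e_{(a_1,\dots,a_n)} = \prod_i e^i_{a_i}$. Then for each $1 \le i \le n-1$, $a_i = 0$ if and only if $i$ is an ascent of $w$. Furthermore, if $i$ is a descent of $w$ and $i-1$ is an ascent of $w$, then $\partial_i(\mathfrak{S}_w) = \mathfrak{S}_{ws_i}$ is also a single standard elementary monomial. Similarly, suppose that $\mathfrak{S}_w$ is a single complete homogeneous monomial $h_{(a_1,\dots,a_n)} = \prod_i h^i_{a_i}$. Then $a_i = 0$ if and only if $i$ is an ascent of $w$; and if $i$ is a descent of $w$ and $i+1$ is an ascent of $w$, then $\partial_i(\mathfrak{S}_w) = \mathfrak{S}_{ws_i}$ is also a single complete homogeneous monomial.
   Context: $e^i_j$ (resp. $h^i_j$) is the elementary (resp. complete homogeneous) symmetric polynomial of degree $j$ in $x_1,\dots,x_i$. The divided difference operator is $\partial_i f = (f - s_i f)/(x_i - x_{i+1})$ where $s_i$ swaps $x_i$ and $x_{i+1}$. Schubert polynomials: $\mathfrak{S}_{w_0} = x_1^{n-1}\cdots x_{n-1}$ for the longest $w_0\in S_n$, and $\partial_i\mathfrak{S}_w = \mathfrak{S}_{ws_i}$ if $\ell(ws_i) = \ell(w)-1$, $0$ otherwise. A position $i$ is a descent of $w$ if $w(i+1) < w(i)$ and an ascent if $w(i+1) > w(i)$. *)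

theory Defs
  imports "HOL-Library.Poly_Mapping" "HOL-Combinatorics.Transposition" "HOL-Combinatorics.Permutations"
begin

text \<open>Polynomials in variables x_1, x_2, ... (indexed by nat) with integer coefficients,
  represented as finitely supported maps from monomials (exponent vectors) to coefficients.\<close>
type_synonym mpoly = "(nat \<Rightarrow>\<^sub>0 nat) \<Rightarrow>\<^sub>0 int"

definition mon :: "(nat \<Rightarrow>\<^sub>0 nat) \<Rightarrow> mpoly" where
  "mon m = Poly_Mapping.single m 1"

definition var :: "nat \<Rightarrow> mpoly" where
  "var i = mon (Poly_Mapping.single i 1)"

definition swap_mon :: "nat \<Rightarrow> (nat \<Rightarrow>\<^sub>0 nat) \<Rightarrow> (nat \<Rightarrow>\<^sub>0 nat)" where
  "swap_mon i m = Abs_poly_mapping (\<lambda>k. Poly_Mapping.lookup m (transpose i (i+1) k))"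

definition swap_vars :: "nat \<Rightarrow> mpoly \<Rightarrow> mpoly" where
  "swap_vars i f = Abs_poly_mapping (\<lambda>m. Poly_Mapping.lookup f (swap_mon i m))"

definition divdiff :: "nat \<Rightarrow> mpoly \<Rightarrow> mpoly" where
  "divdiff i f = (THE g. (var i - var (i+1)) * g = f - swap_vars i f)"

definition elem :: "nat \<Rightarrow> nat \<Rightarrow> mpoly" where
  "elem i j = (\<Sum>S\<in>{S. S \<subseteq> {1..i} \<and> card S = j}. \<Prod>k\<in>S. var k)"

definition chom :: "nat \<Rightarrow> nat \<Rightarrow> mpoly" where
  "chom i j = (\<Sum>m\<in>{m. Poly_Mapping.keys m \<subseteq> {1..i} \<and> (\<Sum>k\<in>{1..i}. Poly_Mapping.lookup m k) = j}. mon m)"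

definition elem_monomial :: "nat \<Rightarrow> (nat \<Rightarrow> nat) \<Rightarrow> mpoly" where
  "elem_monomial n a = (\<Prod>i\<in>{1..n}. elem i (a i))"

definition chom_monomial :: "nat \<Rightarrow> (nat \<Rightarrow> nat) \<Rightarrow> mpoly" where
  "chom_monomial n a = (\<Prod>i\<in>{1..n}. chom i (a i))"

text \<open>Permutations of S_n as maps nat => nat permuting {1..n} (identity elsewhere).\<close>
definition inv_length :: "nat \<Rightarrow> (nat \<Rightarrow> nat) \<Rightarrow> nat" where
  "inv_length n w = card {(i,j). 1 \<le> i \<and> i < j \<and> j \<le> n \<and> w j < w i}"

definition longest :: "nat \<Rightarrow> nat \<Rightarrow> nat" where
  "longest n k = (if 1 \<le> k \<and> k \<le> n then n + 1 - k else k)"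

definition staircase :: "nat \<Rightarrow> mpoly" where
  "staircase n = (\<Prod>k\<in>{1..n}. var k ^ (n - k))"

definition is_schubert_family :: "nat \<Rightarrow> ((nat \<Rightarrow> nat) \<Rightarrow> mpoly) \<Rightarrow> bool" where
  "is_schubert_family n S \<longleftrightarrow>
     S (longest n) = staircase n \<and>
     (\<forall>w i. w permutes {1..n} \<and> 1 \<le> i \<and> i < n \<longrightarrow>
        divdiff i (S w) =
          (if inv_length n (w \<circ> transpose i (i+1)) + 1 = inv_length n w
           then S (w \<circ> transpose i (i+1)) else 0))"

definition schubert :: "nat \<Rightarrow> (nat \<Rightarrow> nat) \<Rightarrow> mpoly" where
  "schubert n w = (THE S. is_schubert_family n S
                          \<and> (\<forall>v. \<not> v permutes {1..n} \<longrightarrow> S v = 0)) w"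

text \<open>Ascent/descent. Since w fixes 0 and n+1, position 0 and position n count as ascents.\<close>
definition ascent :: "(nat \<Rightarrow> nat) \<Rightarrow> nat \<Rightarrow> bool" where
  "ascent w i \<longleftrightarrow> w i < w (i+1)"

definition descent :: "(nat \<Rightarrow> nat) \<Rightarrow> nat \<Rightarrow> bool" where
  "descent w i \<longleftrightarrow> w (i+1) < w i"

end

theory Submission
  imports Defs
begin

text \<open>
  The divided difference \<partial>_i kills S_w exactly when i is an ascent of w: at an ascent
  \<partial>_i S_w = \<partial>_i \<partial>_i S_(w s_i) = 0, and at a descent \<partial>_i S_w = S_(w s_i), which is nonzero because
  some chain of divided differences from S_(w_0) = x^\<delta> down to S_id stays on single monomials
  and ends at 1.

  If S_w = \<Prod>_j e^j_(a_j), every factor other than e^i_(a_i) is symmetric in x_i, x_(i+1), so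
  \<partial>_i S_w = (\<partial>_i e^i_(a_i)) \<Prod>_(j \<noteq> i) e^j_(a_j), where \<partial>_i e^i_a is 0 for a = 0 and equals
  e^(i-1)_(a-1) \<noteq> 0 otherwise.  Hence a_i = 0 iff i is an ascent, and at a descent i with
  a_(i-1) = 0 the polynomial S_(w s_i) is the standard elementary monomial obtained by moving
  one unit of exponent from position i to position i - 1.  For complete homogeneous monomials
  \<partial>_i h^i_a = h^(i+1)_(a-1) moves it to position i + 1 instead; at i + 1 = n the exponent there
  vanishes because S_w has degree at most n - k in x_k and so is symmetric in x_n, x_(n+1).

  The definition only characterises the Schubert polynomials; they exist because the recursion
  along any reduced word gives the same polynomial, by the commutation and braid relations of
  the divided differences.
\<close>

section \<open>Monomials and renaming of variables\<close>

lemma mon_add: "mon (m + m') = mon m * mon m'"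
  unfolding mon_def by (simp add: mult_single)

lemma mon_0 [simp]: "mon 0 = 1"
  unfolding mon_def by simp

lemma mon_nonzero [simp]: "mon m \<noteq> 0"
  unfolding mon_def by simp

lemma prod_mon: "(\<Prod>k\<in>A. mon (m k)) = mon (\<Sum>k\<in>A. m k)"
  by (induction A rule: infinite_finite_induct) (simp_all add: mon_add)

lemma var_power: "var k ^ e = mon (Poly_Mapping.single k e)"
  by (induction e) (simp_all add: var_def mon_add[symmetric] single_add[symmetric])

lemma var_eq_var_iff [simp]: "var a = var b \<longleftrightarrow> a = b"
  unfolding var_def mon_def
  by (metis inj_single injD lookup_single_eq lookup_single_not_eq one_neq_zero)

definition involution :: "(nat \<Rightarrow> nat) \<Rightarrow> bool" where
  "involution \<sigma> \<longleftrightarrow> (\<forall>k. \<sigma> (\<sigma> k) = k)"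

lemma involution_inj: "involution \<sigma> \<Longrightarrow> inj \<sigma>"
  unfolding involution_def by (metis injI)

lemma involution_transpose [simp]: "involution (transpose a b)"
  unfolding involution_def by simp

definition rename_mon :: "(nat \<Rightarrow> nat) \<Rightarrow> (nat \<Rightarrow>\<^sub>0 nat) \<Rightarrow> (nat \<Rightarrow>\<^sub>0 nat)" where
  "rename_mon \<sigma> m = Abs_poly_mapping (\<lambda>k. Poly_Mapping.lookup m (\<sigma> k))"

definition rename_vars :: "(nat \<Rightarrow> nat) \<Rightarrow> mpoly \<Rightarrow> mpoly" where
  "rename_vars \<sigma> f = Abs_poly_mapping (\<lambda>m. Poly_Mapping.lookup f (rename_mon \<sigma> m))"

lemma swap_vars_eq_rename_vars: "swap_vars i = rename_vars (transpose i (Suc i))"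
  unfolding swap_vars_def rename_vars_def swap_mon_def rename_mon_def by simp

lemma lookup_rename_mon:
  assumes "inj \<sigma>"
  shows "Poly_Mapping.lookup (rename_mon \<sigma> m) k = Poly_Mapping.lookup m (\<sigma> k)"
proof -
  have "{k. Poly_Mapping.lookup m (\<sigma> k) \<noteq> 0} = \<sigma> -` Poly_Mapping.keys m"
    by (auto simp: in_keys_iff)
  then show ?thesis
    using assms unfolding rename_mon_def by (simp add: finite_vimageI)
qed

lemma rename_mon_rename_mon [simp]: "involution \<sigma> \<Longrightarrow> rename_mon \<sigma> (rename_mon \<sigma> m) = m"
  by (rule poly_mapping_eqI) (simp add: lookup_rename_mon involution_inj, simp add: involution_def)

lemma inj_rename_mon: "involution \<sigma> \<Longrightarrow> inj (rename_mon \<sigma>)"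
  by (metis injI rename_mon_rename_mon)

lemma rename_mon_add: "inj \<sigma> \<Longrightarrow> rename_mon \<sigma> (m + m') = rename_mon \<sigma> m + rename_mon \<sigma> m'"
  by (rule poly_mapping_eqI) (simp add: lookup_rename_mon lookup_add)

lemma rename_mon_0: "inj \<sigma> \<Longrightarrow> rename_mon \<sigma> 0 = 0"
  by (rule poly_mapping_eqI) (simp add: lookup_rename_mon)

lemma rename_mon_single:
  "involution \<sigma> \<Longrightarrow> rename_mon \<sigma> (Poly_Mapping.single k e) = Poly_Mapping.single (\<sigma> k) e"
  by (rule poly_mapping_eqI)
    (auto simp: lookup_rename_mon involution_inj lookup_single when_def involution_def)

lemma lookup_rename_vars:
  assumes "involution \<sigma>"
  shows "Poly_Mapping.lookup (rename_vars \<sigma> f) m = Poly_Mapping.lookup f (rename_mon \<sigma> m)"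
proof -
  have "{m. Poly_Mapping.lookup f (rename_mon \<sigma> m) \<noteq> 0} = rename_mon \<sigma> -` Poly_Mapping.keys f"
    by (auto simp: in_keys_iff)
  then show ?thesis
    using assms inj_rename_mon unfolding rename_vars_def by (simp add: finite_vimageI)
qed

context
  fixes \<sigma> :: "nat \<Rightarrow> nat"
  assumes \<sigma>: "involution \<sigma>"
begin

lemma rename_vars_rename_vars [simp]: "rename_vars \<sigma> (rename_vars \<sigma> f) = f"
  by (rule poly_mapping_eqI) (simp add: lookup_rename_vars \<sigma>)

lemma rename_vars_add [simp]: "rename_vars \<sigma> (f + g) = rename_vars \<sigma> f + rename_vars \<sigma> g"
  by (rule poly_mapping_eqI) (simp add: lookup_rename_vars \<sigma> lookup_add)

lemma rename_vars_diff [simp]: "rename_vars \<sigma> (f - g) = rename_vars \<sigma> f - rename_vars \<sigma> g"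
  by (rule poly_mapping_eqI) (simp add: lookup_rename_vars \<sigma> lookup_minus)

lemma rename_vars_uminus [simp]: "rename_vars \<sigma> (- f) = - rename_vars \<sigma> f"
  by (rule poly_mapping_eqI) (simp add: lookup_rename_vars \<sigma>)

lemma rename_vars_0 [simp]: "rename_vars \<sigma> 0 = 0"
  by (rule poly_mapping_eqI) (simp add: lookup_rename_vars \<sigma>)

lemma rename_vars_single:
  "rename_vars \<sigma> (Poly_Mapping.single m c) = Poly_Mapping.single (rename_mon \<sigma> m) c"
  by (rule poly_mapping_eqI) (auto simp: lookup_rename_vars \<sigma> lookup_single when_def)

lemma rename_vars_mon [simp]: "rename_vars \<sigma> (mon m) = mon (rename_mon \<sigma> m)"
  unfolding mon_def by (rule rename_vars_single)

lemma rename_vars_mult [simp]: "rename_vars \<sigma> (f * g) = rename_vars \<sigma> f * rename_vars \<sigma> g"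
proof -
  have "Poly_Mapping.keys f \<subseteq> UNIV" "Poly_Mapping.keys g \<subseteq> UNIV" by simp_all
  then show ?thesis
  proof (induction f rule: frag_induction)
    case (one m)
    from \<open>Poly_Mapping.keys g \<subseteq> UNIV\<close> show ?case
    proof (induction g rule: frag_induction)
      case (one m')
      show ?case
        using \<sigma> by (simp add: rename_vars_single mult_single rename_mon_add involution_inj)
    qed (simp_all add: right_diff_distrib)
  qed (simp_all add: left_diff_distrib)
qed

lemma rename_vars_1 [simp]: "rename_vars \<sigma> 1 = 1"
  using rename_vars_mon[of 0] \<sigma> by (simp add: mon_def rename_mon_0 involution_inj)

lemma rename_vars_power [simp]: "rename_vars \<sigma> (f ^ k) = rename_vars \<sigma> f ^ k"
  by (induction k) simp_all

lemma rename_vars_sum: "rename_vars \<sigma> (sum F A) = (\<Sum>a\<in>A. rename_vars \<sigma> (F a))"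
  by (induction A rule: infinite_finite_induct) simp_all

lemma rename_vars_prod: "rename_vars \<sigma> (prod F A) = (\<Prod>a\<in>A. rename_vars \<sigma> (F a))"
  by (induction A rule: infinite_finite_induct) simp_all

lemma rename_vars_var [simp]: "rename_vars \<sigma> (var k) = var (\<sigma> k)"
  unfolding var_def using \<sigma> by (simp add: rename_mon_single)

end

lemma swap_vars_swap_vars [simp]: "swap_vars i (swap_vars i f) = f"
  by (simp add: swap_vars_eq_rename_vars)

lemma swap_vars_add [simp]: "swap_vars i (f + g) = swap_vars i f + swap_vars i g"
  by (simp add: swap_vars_eq_rename_vars)

lemma swap_vars_diff [simp]: "swap_vars i (f - g) = swap_vars i f - swap_vars i g"
  by (simp add: swap_vars_eq_rename_vars)

lemma swap_vars_uminus [simp]: "swap_vars i (- f) = - swap_vars i f"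
  by (simp add: swap_vars_eq_rename_vars)

lemma swap_vars_0 [simp]: "swap_vars i 0 = 0"
  by (simp add: swap_vars_eq_rename_vars)

lemma swap_vars_mult [simp]: "swap_vars i (f * g) = swap_vars i f * swap_vars i g"
  by (simp add: swap_vars_eq_rename_vars)

lemma swap_vars_1 [simp]: "swap_vars i 1 = 1"
  by (simp add: swap_vars_eq_rename_vars)

lemma swap_vars_power [simp]: "swap_vars i (f ^ k) = swap_vars i f ^ k"
  by (simp add: swap_vars_eq_rename_vars)

lemma swap_vars_prod: "swap_vars i (prod F A) = (\<Prod>a\<in>A. swap_vars i (F a))"
  by (simp add: swap_vars_eq_rename_vars rename_vars_prod)

lemma swap_vars_var [simp]: "swap_vars i (var k) = var (transpose i (Suc i) k)"
  by (simp add: swap_vars_eq_rename_vars)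

lemma swap_vars_mon: "swap_vars i (mon m) = mon (rename_mon (transpose i (Suc i)) m)"
  by (simp add: swap_vars_eq_rename_vars)

lemma swap_vars_braid:
  "swap_vars i (swap_vars (Suc i) (swap_vars i f)) =
   swap_vars (Suc i) (swap_vars i (swap_vars (Suc i) f))"
proof (rule poly_mapping_eqI)
  fix m
  let ?s = "rename_mon (transpose i (Suc i))" and ?t = "rename_mon (transpose (Suc i) (Suc (Suc i)))"
  have "?s (?t (?s m)) = ?t (?s (?t m))"
    by (rule poly_mapping_eqI) (simp add: lookup_rename_mon transpose_def)
  then show "Poly_Mapping.lookup (swap_vars i (swap_vars (Suc i) (swap_vars i f))) m =
             Poly_Mapping.lookup (swap_vars (Suc i) (swap_vars i (swap_vars (Suc i) f))) m"
    by (simp add: swap_vars_eq_rename_vars lookup_rename_vars)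
qed

lemma swap_vars_commute:
  assumes "Suc i < j \<or> Suc j < i"
  shows "swap_vars i (swap_vars j f) = swap_vars j (swap_vars i f)"
proof (rule poly_mapping_eqI)
  fix m
  have "rename_mon (transpose i (Suc i)) (rename_mon (transpose j (Suc j)) m) =
        rename_mon (transpose j (Suc j)) (rename_mon (transpose i (Suc i)) m)"
    using assms by (intro poly_mapping_eqI) (auto simp: lookup_rename_mon transpose_def)
  then show "Poly_Mapping.lookup (swap_vars i (swap_vars j f)) m =
             Poly_Mapping.lookup (swap_vars j (swap_vars i f)) m"
    by (simp add: swap_vars_eq_rename_vars lookup_rename_vars)
qed

section \<open>Divided differences\<close>

definition root :: "nat \<Rightarrow> mpoly" where
  "root i = var i - var (Suc i)"

lemma root_nonzero [simp]: "root i \<noteq> 0"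
  by (simp add: root_def)

lemma swap_vars_root [simp]: "swap_vars i (root i) = - root i"
  by (simp add: root_def)

definition has_divdiff :: "nat \<Rightarrow> mpoly \<Rightarrow> bool" where
  "has_divdiff i f \<longleftrightarrow> (\<exists>g. root i * g = f - swap_vars i f)"

lemma has_divdiff_diff: "has_divdiff i f \<Longrightarrow> has_divdiff i g \<Longrightarrow> has_divdiff i (f - g)"
proof -
  assume "has_divdiff i f" "has_divdiff i g"
  then obtain p q where p: "root i * p = f - swap_vars i f" and q: "root i * q = g - swap_vars i g"
    unfolding has_divdiff_def by blast
  have "f - g - swap_vars i (f - g) = root i * (p - q)"
    by (simp add: p q right_diff_distrib)
  then show ?thesis
    unfolding has_divdiff_def by metis
qed

lemma has_divdiff_mult: "has_divdiff i f \<Longrightarrow> has_divdiff i g \<Longrightarrow> has_divdiff i (f * g)"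
proof -
  assume "has_divdiff i f" "has_divdiff i g"
  then obtain p q where p: "root i * p = f - swap_vars i f" and q: "root i * q = g - swap_vars i g"
    unfolding has_divdiff_def by blast
  have "f * g - swap_vars i (f * g) = (f - swap_vars i f) * g + swap_vars i f * (g - swap_vars i g)"
    by (simp add: algebra_simps)
  also have "\<dots> = root i * (p * g + swap_vars i f * q)"
    by (simp add: p[symmetric] q[symmetric] algebra_simps)
  finally show ?thesis
    unfolding has_divdiff_def by metis
qed

lemma has_divdiff_var: "has_divdiff i (var k)"
proof -
  have "root i * (if k = i then 1 else if k = Suc i then -1 else 0) = var k - swap_vars i (var k)"
    by (auto simp: root_def)
  then show ?thesis
    unfolding has_divdiff_def by blast
qed

lemma has_divdiff_1: "has_divdiff i 1"
  unfolding has_divdiff_def by (rule exI[of _ 0]) simp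

lemma has_divdiff_mon: "has_divdiff i (mon m)"
proof (induction m rule: update_induct)
  case (update m k e)
  have "has_divdiff i (var k ^ e)"
    by (induction e) (simp_all add: has_divdiff_1 has_divdiff_mult has_divdiff_var)
  moreover have "Poly_Mapping.update k e m = m + Poly_Mapping.single k e"
    using update.hyps(1)
    by (intro poly_mapping_eqI) (auto simp: lookup_update lookup_add lookup_single when_def in_keys_iff)
  ultimately show ?case
    using update.IH by (simp add: mon_add var_power has_divdiff_mult)
qed (simp add: has_divdiff_1)

lemma has_divdiff_all: "has_divdiff i f"
proof -
  have "Poly_Mapping.keys f \<subseteq> UNIV" by simp
  then show ?thesis
  proof (induction f rule: frag_induction)
    case zero
    show ?case
      unfolding has_divdiff_def by (rule exI[of _ 0]) simp
  next
    case (one m)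
    show ?case
      using has_divdiff_mon[of i m] by (simp add: mon_def)
  qed (rule has_divdiff_diff)
qed

lemma root_mult_divdiff: "root i * divdiff i f = f - swap_vars i f"
proof -
  have "\<exists>!g. root i * g = f - swap_vars i f"
    using has_divdiff_all[of i f] unfolding has_divdiff_def by (metis mult_left_cancel root_nonzero)
  from theI'[OF this] show ?thesis
    unfolding divdiff_def by (simp add: root_def)
qed

lemma divdiff_eqI: "root i * g = f - swap_vars i f \<Longrightarrow> divdiff i f = g"
  by (metis root_mult_divdiff mult_left_cancel root_nonzero)

lemma divdiff_add [simp]: "divdiff i (f + g) = divdiff i f + divdiff i g"
  by (rule divdiff_eqI) (simp add: distrib_left root_mult_divdiff)

lemma divdiff_diff [simp]: "divdiff i (f - g) = divdiff i f - divdiff i g"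
  by (rule divdiff_eqI) (simp add: right_diff_distrib root_mult_divdiff)

lemma divdiff_0 [simp]: "divdiff i 0 = 0"
  by (rule divdiff_eqI) simp

lemma divdiff_mult: "divdiff i (f * g) = divdiff i f * g + swap_vars i f * divdiff i g"
proof (rule divdiff_eqI)
  have "root i * (divdiff i f * g + swap_vars i f * divdiff i g) =
        (root i * divdiff i f) * g + swap_vars i f * (root i * divdiff i g)"
    by (simp add: algebra_simps)
  also have "\<dots> = f * g - swap_vars i (f * g)"
    by (simp add: root_mult_divdiff algebra_simps)
  finally show "root i * (divdiff i f * g + swap_vars i f * divdiff i g) = f * g - swap_vars i (f * g)" .
qed

lemma divdiff_symmetric: "swap_vars i f = f \<Longrightarrow> divdiff i f = 0"
  by (rule divdiff_eqI) simp

lemma divdiff_mult_symmetric: "swap_vars i f = f \<Longrightarrow> divdiff i (f * g) = f * divdiff i g"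
  by (simp add: divdiff_mult divdiff_symmetric)

lemma swap_vars_divdiff [simp]: "swap_vars i (divdiff i f) = divdiff i f"
proof -
  have "root i * swap_vars i (divdiff i f) = - swap_vars i (root i * divdiff i f)"
    by simp
  also have "\<dots> = root i * divdiff i f"
    by (simp add: root_mult_divdiff)
  finally show ?thesis
    by simp
qed

lemma divdiff_divdiff [simp]: "divdiff i (divdiff i f) = 0"
  by (simp add: divdiff_symmetric)

lemma divdiff_1 [simp]: "divdiff i 1 = 0"
  by (simp add: divdiff_symmetric)

lemma divdiff_var_self [simp]: "divdiff i (var i) = 1"
  by (rule divdiff_eqI) (simp add: root_def)

lemma divdiff_var_Suc [simp]: "divdiff i (var (Suc i)) = -1"
  by (rule divdiff_eqI) (simp add: root_def)

lemma divdiff_swap_vars: "divdiff i (swap_vars i f) = - divdiff i f"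
  by (rule divdiff_eqI) (simp add: root_mult_divdiff)

lemma divdiff_commute:
  assumes "Suc i < j \<or> Suc j < i"
  shows "divdiff i (divdiff j f) = divdiff j (divdiff i f)"
proof -
  have expansion: "root a * root b * divdiff a (divdiff b f) =
      f - swap_vars b f - swap_vars a f + swap_vars a (swap_vars b f)"
    if "Suc a < b \<or> Suc b < a" for a b
  proof -
    have "swap_vars a (root b) = root b"
      using that by (auto simp: root_def transpose_def)
    then have "root b * swap_vars a (divdiff b f) = swap_vars a f - swap_vars a (swap_vars b f)"
      by (metis root_mult_divdiff swap_vars_diff swap_vars_mult)
    moreover have "root a * root b * divdiff a (divdiff b f) =
        root b * (root a * divdiff a (divdiff b f))"
      by (simp only: ac_simps)
    ultimately show ?thesis
      by (simp add: root_mult_divdiff right_diff_distrib)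
  qed
  have "root i * root j * divdiff j (divdiff i f) = root j * root i * divdiff j (divdiff i f)"
    by (simp only: mult.commute)
  also have "\<dots> = f - swap_vars i f - swap_vars j f + swap_vars j (swap_vars i f)"
    using assms by (intro expansion) auto
  also have "\<dots> = root i * root j * divdiff i (divdiff j f)"
    using assms by (subst expansion) (auto simp: swap_vars_commute[OF assms, of f])
  finally show ?thesis
    by simp
qed

text \<open>Both sides of the braid relation, multiplied by the Vandermonde product
  (x_i - x_(i+1))(x_(i+1) - x_(i+2))(x_i - x_(i+2)), give the alternating sum of f over the
  six permutations of x_i, x_(i+1), x_(i+2).\<close>

lemma divdiff_braid_expansion:
  assumes "j = Suc i \<or> i = Suc j"
  shows "root i * root j * swap_vars i (root j) * divdiff i (divdiff j (divdiff i f)) =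
    f - swap_vars i f - swap_vars j f + swap_vars j (swap_vars i f) + swap_vars i (swap_vars j f)
      - swap_vars i (swap_vars j (swap_vars i f))"
proof -
  define s t where "s = swap_vars i" and "t = swap_vars j"
  define \<alpha> \<beta> \<gamma> where "\<alpha> = root i" and "\<beta> = root j" and "\<gamma> = s \<beta>"
  define g1 g2 g3 where "g1 = divdiff i f" and "g2 = divdiff j g1" and "g3 = divdiff i g2"
  have roots: "t \<alpha> = \<gamma>" "s \<gamma> = \<beta>" "\<gamma> - \<beta> = \<alpha>"
    using assms unfolding s_def t_def \<alpha>_def \<beta>_def \<gamma>_def by (auto simp: root_def)
  have e1: "\<alpha> * g1 = f - s f" and e2: "\<beta> * g2 = g1 - t g1" and e3: "\<alpha> * g3 = g2 - s g2"
    unfolding s_def t_def \<alpha>_def \<beta>_def g1_def g2_def g3_def by (simp_all add: root_mult_divdiff)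
  have e4: "\<gamma> * s g2 = g1 - s (t g1)"
    using arg_cong[OF e2, of s] unfolding \<gamma>_def s_def g1_def by simp
  have e5: "\<gamma> * t g1 = t f - t (s f)"
    using arg_cong[OF e1, of t] roots(1) unfolding t_def by simp
  have e6: "\<beta> * s (t g1) = s (t f) - s (t (s f))"
    using arg_cong[OF e5, of s] roots(2) unfolding s_def by simp
  have "\<alpha> * \<beta> * \<gamma> * g3 = \<beta> * \<gamma> * (\<alpha> * g3)"
    by (simp only: ac_simps)
  also have "\<dots> = \<gamma> * (\<beta> * g2) - \<beta> * (\<gamma> * s g2)"
    unfolding e3 by (simp add: algebra_simps)
  also have "\<dots> = (\<gamma> - \<beta>) * g1 - \<gamma> * t g1 + \<beta> * s (t g1)"
    unfolding e2 e4 by (simp add: algebra_simps)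
  also have "\<dots> = f - s f - (t f - t (s f)) + (s (t f) - s (t (s f)))"
    by (simp only: roots(3) e1 e5 e6)
  finally have "\<alpha> * \<beta> * \<gamma> * g3 = f - s f - t f + t (s f) + s (t f) - s (t (s f))"
    by (simp add: algebra_simps)
  then show ?thesis
    unfolding s_def t_def \<alpha>_def \<beta>_def \<gamma>_def g1_def g2_def g3_def .
qed

lemma divdiff_braid:
  "divdiff i (divdiff (Suc i) (divdiff i f)) = divdiff (Suc i) (divdiff i (divdiff (Suc i) f))"
proof -
  define P where "P = root i * root (Suc i) * swap_vars i (root (Suc i))"
  have "P = root (Suc i) * root i * swap_vars (Suc i) (root i)"
    unfolding P_def by (simp add: root_def)
  then have "P * divdiff (Suc i) (divdiff i (divdiff (Suc i) f)) =
      f - swap_vars (Suc i) f - swap_vars i f + swap_vars i (swap_vars (Suc i) f)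
      + swap_vars (Suc i) (swap_vars i f) - swap_vars i (swap_vars (Suc i) (swap_vars i f))"
    using divdiff_braid_expansion[where i = "Suc i" and j = i and f = f] by (simp add: swap_vars_braid)
  also have "\<dots> = P * divdiff i (divdiff (Suc i) (divdiff i f))"
    unfolding P_def by (subst divdiff_braid_expansion) simp_all
  finally show ?thesis
    unfolding P_def by (simp add: root_def)
qed

section \<open>Inversions and length\<close>

definition inversions :: "nat \<Rightarrow> (nat \<Rightarrow> nat) \<Rightarrow> (nat \<times> nat) set" where
  "inversions n w = {(i, j). 1 \<le> i \<and> i < j \<and> j \<le> n \<and> w j < w i}"

lemma inv_length_eq_card: "inv_length n w = card (inversions n w)"
  unfolding inv_length_def inversions_def ..

lemma inv_length_le: "inv_length n w \<le> n * n"
proof -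
  have "inversions n w \<subseteq> {1..n} \<times> {1..n}"
    unfolding inversions_def by auto
  then have "card (inversions n w) \<le> card ({1..n} \<times> {1..n})"
    by (intro card_mono) simp_all
  then show ?thesis
    by (simp add: inv_length_eq_card)
qed

lemma permutes_comp_transpose:
  "w permutes {1..n} \<Longrightarrow> 1 \<le> i \<Longrightarrow> i < n \<Longrightarrow> w \<circ> transpose i (Suc i) permutes {1..n}"
  by (rule permutes_compose[OF permutes_swap_id]) auto

lemma permutes_ascent_or_descent:
  assumes "w permutes {1..n}"
  shows "ascent w i \<or> descent w i"
  using permutes_inj[OF assms] unfolding ascent_def descent_def
  by (metis injD n_not_Suc_n Suc_eq_plus1 linorder_neqE_nat)

lemma comp_transpose_transpose [simp]: "w \<circ> transpose a b \<circ> transpose a b = w"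
  by (simp add: comp_assoc)

lemma ascent_comp_transpose_iff_descent [simp]:
  "ascent (w \<circ> transpose i (Suc i)) i \<longleftrightarrow> descent w i"
  by (simp add: ascent_def descent_def)

lemma transpose_adjacent_less:
  "p < q \<Longrightarrow> (p, q) \<noteq> (i, Suc i) \<Longrightarrow> transpose i (Suc i) p < transpose i (Suc i) q"
  by (auto simp: transpose_def)

lemma transpose_adjacent_in_range:
  "1 \<le> i \<Longrightarrow> i < n \<Longrightarrow> p \<in> {1..n} \<Longrightarrow> transpose i (Suc i) p \<in> {1..n}"
  by (auto simp: transpose_def)

lemma inversions_comp_transpose:
  assumes "ascent w i" "1 \<le> i" "i < n"
  shows "inversions n (w \<circ> transpose i (Suc i)) =
    insert (i, Suc i) (map_prod (transpose i (Suc i)) (transpose i (Suc i)) ` inversions n w)"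
    (is "?lhs = insert _ (?t ` _)")
proof (intro set_eqI iffI)
  fix pq assume pq: "pq \<in> ?lhs"
  show "pq \<in> insert (i, Suc i) (?t ` inversions n w)"
  proof (cases "pq = (i, Suc i)")
    case False
    obtain p q where [simp]: "pq = (p, q)"
      by fastforce
    have "transpose i (Suc i) p < transpose i (Suc i) q"
      using pq False by (intro transpose_adjacent_less) (auto simp: inversions_def)
    then have "(transpose i (Suc i) p, transpose i (Suc i) q) \<in> inversions n w"
      using pq assms(2,3) transpose_adjacent_in_range[of i n p] transpose_adjacent_in_range[of i n q]
      by (auto simp: inversions_def)
    then show ?thesis
      by (intro insertI2 image_eqI[where x = "(transpose i (Suc i) p, transpose i (Suc i) q)"]) simp_all
  qed simp
next
  fix pq assume "pq \<in> insert (i, Suc i) (?t ` inversions n w)"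
  then consider "pq = (i, Suc i)" | p q where "(p, q) \<in> inversions n w" "pq = ?t (p, q)"
    by auto
  then show "pq \<in> ?lhs"
  proof cases
    case 2
    then have "(p, q) \<noteq> (i, Suc i)"
      using assms(1) by (auto simp: inversions_def ascent_def)
    then show ?thesis
      using 2 assms(2,3) transpose_adjacent_less[of p q i]
        transpose_adjacent_in_range[of i n p] transpose_adjacent_in_range[of i n q]
      by (auto simp: inversions_def)
  qed (use assms in \<open>simp add: inversions_def ascent_def\<close>)
qed

lemma inv_length_ascent:
  assumes "ascent w i" "1 \<le> i" "i < n"
  shows "inv_length n (w \<circ> transpose i (Suc i)) = Suc (inv_length n w)"
proof -
  let ?t = "map_prod (transpose i (Suc i)) (transpose i (Suc i))"
  have "inj ?t"
    using map_prod_inj_on[of "transpose i (Suc i)" UNIV "transpose i (Suc i)" UNIV]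
    by (simp add: inj_transpose)
  moreover have "(i, Suc i) = ?t (Suc i, i)" "(Suc i, i) \<notin> inversions n w"
    by (simp_all add: inversions_def)
  then have "(i, Suc i) \<notin> ?t ` inversions n w"
    using \<open>inj ?t\<close> by (metis inj_image_mem_iff)
  moreover have "finite (inversions n w)"
    by (rule finite_subset[of _ "{1..n} \<times> {1..n}"]) (auto simp: inversions_def)
  ultimately show ?thesis
    unfolding inv_length_eq_card inversions_comp_transpose[OF assms]
    by (simp add: card_image inj_on_subset)
qed

lemma inv_length_descent:
  assumes "descent w i" "1 \<le> i" "i < n"
  shows "inv_length n w = Suc (inv_length n (w \<circ> transpose i (Suc i)))"
  using inv_length_ascent[of "w \<circ> transpose i (Suc i)" i n] assms by simp

lemma ascents_increasing:
  assumes asc: "\<And>i. 1 \<le> i \<Longrightarrow> i < n \<Longrightarrow> ascent w i" and "1 \<le> k" "k + d \<le> n"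
  shows "w k + d \<le> w (k + d)"
  using assms(3)
proof (induction d)
  case (Suc d)
  then have "w (k + d) < w (Suc (k + d))"
    using asc[of "k + d"] \<open>1 \<le> k\<close> by (simp add: ascent_def)
  then show ?case
    using Suc by simp
qed simp

lemma permutes_no_descent_eq_id:
  assumes w: "w permutes {1..n}" and asc: "\<And>i. 1 \<le> i \<Longrightarrow> i < n \<Longrightarrow> ascent w i"
  shows "w = id"
proof
  fix k
  show "w k = id k"
  proof (cases "k \<in> {1..n}")
    case True
    then have "w 1 + (k - 1) \<le> w k" "w k + (n - k) \<le> w n"
      using ascents_increasing[OF asc, where k = 1 and d = "k - 1"]
        ascents_increasing[OF asc, where k = k and d = "n - k"] by auto
    moreover have "1 \<le> w 1" "w n \<le> n"
      using True permutes_in_image[OF w, of 1] permutes_in_image[OF w, of n] by auto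
    ultimately show ?thesis
      using True by simp
  qed (simp add: permutes_not_in[OF w])
qed

lemma longest_longest [simp]: "longest n (longest n k) = k"
  by (auto simp: longest_def)

lemma longest_permutes: "longest n permutes {1..n}"
proof (rule bij_imp_permutes)
  show "bij_betw (longest n) {1..n} {1..n}"
    by (rule bij_betw_byWitness[of _ "longest n"]) (auto simp: longest_def)
qed (auto simp: longest_def)

lemma permutes_no_ascent_eq_longest:
  assumes w: "w permutes {1..n}" and desc: "\<And>i. 1 \<le> i \<Longrightarrow> i < n \<Longrightarrow> descent w i"
  shows "w = longest n"
proof -
  have "longest n \<circ> w = id"
  proof (rule permutes_no_descent_eq_id)
    show "longest n \<circ> w permutes {1..n}"
      by (rule permutes_compose[OF w longest_permutes])
    fix i assume "1 \<le> i" "i < n"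
    then show "ascent (longest n \<circ> w) i"
      using desc[of i] permutes_in_image[OF w, of i] permutes_in_image[OF w, of "Suc i"]
      by (auto simp: ascent_def descent_def longest_def)
  qed
  then show ?thesis
    by (metis comp_apply id_apply longest_longest ext)
qed

lemma longest_no_ascent: "\<not> (1 \<le> i \<and> i < n \<and> ascent (longest n) i)"
  by (auto simp: ascent_def longest_def)

lemma permutes_ascent_induct [consumes 1, case_names longest ascent]:
  assumes "w permutes {1..n}"
    and longest: "P (longest n)"
    and ascent: "\<And>w i. w permutes {1..n} \<Longrightarrow> 1 \<le> i \<Longrightarrow> i < n \<Longrightarrow> ascent w i \<Longrightarrow>
      P (w \<circ> transpose i (Suc i)) \<Longrightarrow> P w"
  shows "P w"
  using assms(1)
proof (induction w rule: measure_induct_rule[of "\<lambda>w. n * n - inv_length n w"])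
  case (less w)
  show ?case
  proof (cases "w = longest n")
    case False
    then obtain i where i: "1 \<le> i" "i < n" "ascent w i"
      using permutes_no_ascent_eq_longest[OF less.prems] permutes_ascent_or_descent[OF less.prems]
      by blast
    have "n * n - inv_length n (w \<circ> transpose i (Suc i)) < n * n - inv_length n w"
      using inv_length_ascent[OF i(3,1,2)] inv_length_le[of n "w \<circ> transpose i (Suc i)"] by simp
    then show ?thesis
      using ascent[OF less.prems i] less.IH permutes_comp_transpose[OF less.prems i(1,2)] by blast
  qed (simp add: longest)
qed

lemma permutes_descent_induct [consumes 1, case_names id descent]:
  assumes "w permutes {1..n}"
    and id: "P id"
    and descent: "\<And>w i. w permutes {1..n} \<Longrightarrow> 1 \<le> i \<Longrightarrow> i < n \<Longrightarrow> descent w i \<Longrightarrow>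
      P (w \<circ> transpose i (Suc i)) \<Longrightarrow> P w"
  shows "P w"
  using assms(1)
proof (induction "inv_length n w" arbitrary: w rule: less_induct)
  case less
  show ?case
  proof (cases "w = id")
    case False
    then obtain i where i: "1 \<le> i" "i < n" "descent w i"
      using permutes_no_descent_eq_id[OF less.prems] permutes_ascent_or_descent[OF less.prems]
      by blast
    then show ?thesis
      using descent[OF less.prems i] less.hyps permutes_comp_transpose[OF less.prems i(1,2)]
        inv_length_descent[OF i(3,1,2)] by simp
  qed (simp add: id)
qed

lemma inv_length_longest: "inv_length n (longest n) = (\<Sum>j<n. j)"
proof (induction n)
  case (Suc n)
  have "inversions (Suc n) (longest (Suc n)) =
      inversions n (longest n) \<union> (\<lambda>i. (i, Suc n)) ` {1..n}"
    by (auto simp: inversions_def longest_def)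
  moreover have "inversions n (longest n) \<inter> (\<lambda>i. (i, Suc n)) ` {1..n} = {}"
    by (auto simp: inversions_def)
  moreover have "finite (inversions n (longest n))"
    by (rule finite_subset[of _ "{1..n} \<times> {1..n}"]) (auto simp: inversions_def)
  moreover have "card ((\<lambda>i. (i, Suc n)) ` {1..n}) = n"
    by (simp add: card_image inj_on_def)
  ultimately show ?case
    using Suc by (simp add: inv_length_eq_card card_Un_disjoint)
next
  case 0
  have "inversions 0 (longest 0) = {}"
    by (auto simp: inversions_def)
  then show ?case
    by (simp add: inv_length_eq_card)
qed

lemma inv_length_eq_0_imp_id:
  assumes w: "w permutes {1..n}" and "inv_length n w = 0"
  shows "w = id"
proof (rule permutes_no_descent_eq_id[OF w])
  fix i assume i: "1 \<le> i" "i < n"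
  have "finite (inversions n w)"
    by (rule finite_subset[of _ "{1..n} \<times> {1..n}"]) (auto simp: inversions_def)
  then have "(i, Suc i) \<notin> inversions n w"
    using assms(2) by (simp add: inv_length_eq_card)
  then show "ascent w i"
    using i permutes_ascent_or_descent[OF w, of i] by (auto simp: inversions_def descent_def)
qed

section \<open>Existence and uniqueness of the Schubert polynomials\<close>

definition first_ascent :: "nat \<Rightarrow> (nat \<Rightarrow> nat) \<Rightarrow> nat" where
  "first_ascent n w = (LEAST i. 1 \<le> i \<and> i < n \<and> ascent w i)"

lemma first_ascent_least:
  assumes "1 \<le> i" "i < n" "ascent w i"
  shows "1 \<le> first_ascent n w" "first_ascent n w < n" "ascent w (first_ascent n w)"
    and "first_ascent n w \<le> i"
  using LeastI[of "\<lambda>i. 1 \<le> i \<and> i < n \<and> ascent w i", OF conjI[OF assms(1) conjI[OF assms(2,3)]]]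
    Least_le[of "\<lambda>i. 1 \<le> i \<and> i < n \<and> ascent w i" i] assms
  unfolding first_ascent_def by blast+

function schubert_rec :: "nat \<Rightarrow> (nat \<Rightarrow> nat) \<Rightarrow> mpoly" where
  "schubert_rec n w =
    (if \<not> w permutes {1..n} then 0
     else if \<exists>i. 1 \<le> i \<and> i < n \<and> ascent w i
     then divdiff (first_ascent n w)
            (schubert_rec n (w \<circ> transpose (first_ascent n w) (Suc (first_ascent n w))))
     else staircase n)"
  by auto
termination
proof (relation "measure (\<lambda>(n, w). n * n - inv_length n w)")
  fix n w
  assume "\<exists>i. 1 \<le> i \<and> i < n \<and> ascent w i"
  then have "1 \<le> first_ascent n w \<and> first_ascent n w < n \<and> ascent w (first_ascent n w)"
    using first_ascent_least by blast
  then show "((n, w \<circ> transpose (first_ascent n w) (Suc (first_ascent n w))), n, w)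
      \<in> measure (\<lambda>(n, w). n * n - inv_length n w)"
    using inv_length_ascent inv_length_le[of n "w \<circ> transpose (first_ascent n w) (Suc (first_ascent n w))"]
    by fastforce
qed simp

declare schubert_rec.simps [simp del]

text \<open>That the recursion holds at every ascent is
  the well-definedness of Schubert polynomials; it rests on the commutation and braid relations
  of the divided differences.\<close>

context
  fixes n :: nat and w :: "nat \<Rightarrow> nat" and S :: "(nat \<Rightarrow> nat) \<Rightarrow> mpoly"
  assumes w: "w permutes {1..n}"
    and longer: "\<And>v k. v permutes {1..n} \<Longrightarrow> inv_length n w < inv_length n v \<Longrightarrow>
      1 \<le> k \<Longrightarrow> k < n \<Longrightarrow> ascent v k \<Longrightarrow> S v = divdiff k (S (v \<circ> transpose k (Suc k)))"
begin

lemma divdiff_distant_ascents_agree: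
  assumes j: "1 \<le> j" "ascent w j" and i: "Suc j < i" "i < n" "ascent w i"
  shows "divdiff j (S (w \<circ> transpose j (Suc j))) = divdiff i (S (w \<circ> transpose i (Suc i)))"
proof -
  define v1 v2 where "v1 = w \<circ> transpose j (Suc j)" and "v2 = w \<circ> transpose i (Suc i)"
  have transp: "transpose i (Suc i) (transpose j (Suc j) k) = transpose j (Suc j) (transpose i (Suc i) k)" for k
    using i by (auto simp: transpose_def)
  have v1: "v1 permutes {1..n}" "inv_length n w < inv_length n v1" "ascent v1 i"
    using w i j permutes_comp_transpose[of w n j] inv_length_ascent[of w j n]
    unfolding v1_def by (auto simp: ascent_def transpose_def)
  have v2: "v2 permutes {1..n}" "inv_length n w < inv_length n v2" "ascent v2 j"
    using w i j permutes_comp_transpose[of w n i] inv_length_ascent[of w i n]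
    unfolding v2_def by (auto simp: ascent_def transpose_def)
  have "v1 \<circ> transpose i (Suc i) = v2 \<circ> transpose j (Suc j)"
    unfolding v1_def v2_def by (auto simp: transp)
  then have "divdiff j (S v1) = divdiff j (divdiff i (S (v2 \<circ> transpose j (Suc j))))"
    using longer[OF v1(1,2) _ i(2) v1(3)] i by simp
  also have "\<dots> = divdiff i (S v2)"
    using longer[OF v2(1,2) j(1) _ v2(3)] i by (simp add: divdiff_commute)
  finally show ?thesis
    unfolding v1_def v2_def .
qed

lemma divdiff_adjacent_ascents_agree:
  assumes j: "1 \<le> j" "Suc j < n" "ascent w j" "ascent w (Suc j)"
  shows "divdiff j (S (w \<circ> transpose j (Suc j))) =
    divdiff (Suc j) (S (w \<circ> transpose (Suc j) (Suc (Suc j))))"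
proof -
  let ?s = "transpose j (Suc j)" and ?t = "transpose (Suc j) (Suc (Suc j))"
  define u1 u2 v1 v2 where "u1 = w \<circ> ?s" and "u2 = u1 \<circ> ?t" and "v1 = w \<circ> ?t" and "v2 = v1 \<circ> ?s"
  have u1: "u1 permutes {1..n}" "inv_length n w < inv_length n u1" "ascent u1 (Suc j)"
    using w j permutes_comp_transpose[of w n j] inv_length_ascent[of w j n]
    unfolding u1_def by (auto simp: ascent_def)
  have u2: "u2 permutes {1..n}" "inv_length n w < inv_length n u2" "ascent u2 j"
    using u1 j permutes_comp_transpose[of u1 n "Suc j"] inv_length_ascent[of u1 "Suc j" n]
    unfolding u2_def by (auto simp: u1_def ascent_def)
  have v1: "v1 permutes {1..n}" "inv_length n w < inv_length n v1" "ascent v1 j"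
    using w j permutes_comp_transpose[of w n "Suc j"] inv_length_ascent[of w "Suc j" n]
    unfolding v1_def by (auto simp: ascent_def)
  have v2: "v2 permutes {1..n}" "inv_length n w < inv_length n v2" "ascent v2 (Suc j)"
    using v1 j permutes_comp_transpose[of v1 n j] inv_length_ascent[of v1 j n]
    unfolding v2_def by (auto simp: v1_def ascent_def)
  have "u2 \<circ> ?s = v2 \<circ> ?t"
    unfolding u1_def u2_def v1_def v2_def by (auto simp: transpose_def)
  then have "S u1 = divdiff (Suc j) (divdiff j (S (v2 \<circ> ?t)))"
    using longer[OF u1(1,2) _ j(2) u1(3)] longer[OF u2(1,2) j(1) _ u2(3)] j
    unfolding u2_def by simp
  moreover have "S v1 = divdiff j (divdiff (Suc j) (S (v2 \<circ> ?t)))"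
    using longer[OF v1(1,2) j(1) _ v1(3)] longer[OF v2(1,2) _ j(2) v2(3)] j
    unfolding v2_def by simp
  ultimately have "divdiff j (S u1) = divdiff (Suc j) (S v1)"
    by (simp add: divdiff_braid)
  then show ?thesis
    unfolding u1_def v1_def .
qed

end

lemma schubert_rec_not_permutes: "\<not> w permutes {1..n} \<Longrightarrow> schubert_rec n w = 0"
  by (subst schubert_rec.simps) simp

lemma schubert_rec_longest: "schubert_rec n (longest n) = staircase n"
proof -
  have "\<not> (\<exists>i. 1 \<le> i \<and> i < n \<and> ascent (longest n) i)"
    using longest_no_ascent by blast
  then show ?thesis
    using longest_permutes by (subst schubert_rec.simps) auto
qed

lemma schubert_rec_ascent:
  assumes "w permutes {1..n}" "1 \<le> i" "i < n" "ascent w i"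
  shows "schubert_rec n w = divdiff i (schubert_rec n (w \<circ> transpose i (Suc i)))"
  using assms
proof (induction w arbitrary: i rule: measure_induct_rule[of "\<lambda>w. n * n - inv_length n w"])
  case (less w)
  define j where "j = first_ascent n w"
  have j: "1 \<le> j" "j < n" "ascent w j" "j \<le> i"
    using first_ascent_least[OF less.prems(2-4)] unfolding j_def by blast+
  have longer: "schubert_rec n v = divdiff k (schubert_rec n (v \<circ> transpose k (Suc k)))"
    if "v permutes {1..n}" "inv_length n w < inv_length n v" "1 \<le> k" "k < n" "ascent v k" for v k
  proof -
    have "n * n - inv_length n v < n * n - inv_length n w"
      using that(2) inv_length_le[of n v] by simp
    then show ?thesis
      using less.IH that unfolding comp_def by blast
  qed
  have "schubert_rec n w = divdiff j (schubert_rec n (w \<circ> transpose j (Suc j)))"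
    using less.prems j unfolding j_def by (subst schubert_rec.simps) auto
  also have "\<dots> = divdiff i (schubert_rec n (w \<circ> transpose i (Suc i)))"
  proof -
    consider "j = i" | "Suc j < i" | "i = Suc j"
      using j(4) by linarith
    then show ?thesis
    proof cases
      case 2
      then show ?thesis
        using divdiff_distant_ascents_agree[OF less.prems(1) longer] j less.prems by blast
    next
      case 3
      then show ?thesis
        using divdiff_adjacent_ascents_agree[OF less.prems(1) longer] j less.prems by blast
    qed simp
  qed
  finally show ?case .
qed

lemma schubert_rec_descent:
  assumes "w permutes {1..n}" "1 \<le> i" "i < n" "descent w i"
  shows "divdiff i (schubert_rec n w) = schubert_rec n (w \<circ> transpose i (Suc i))"
  using schubert_rec_ascent[of "w \<circ> transpose i (Suc i)" n i] assms permutes_comp_transpose[of w n i]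
  by simp

lemma is_schubert_familyD:
  assumes "is_schubert_family n S" "w permutes {1..n}" "1 \<le> i" "i < n" "descent w i"
  shows "divdiff i (S w) = S (w \<circ> transpose i (Suc i))"
proof -
  have "divdiff i (S w) = (if inv_length n (w \<circ> transpose i (i + 1)) + 1 = inv_length n w
      then S (w \<circ> transpose i (i + 1)) else 0)"
    using assms(1-4) unfolding is_schubert_family_def by blast
  then show ?thesis
    using inv_length_descent[OF assms(5,3,4)] by simp
qed

lemma is_schubert_family_schubert_rec: "is_schubert_family n (schubert_rec n)"
  unfolding is_schubert_family_def
proof (intro conjI allI impI)
  fix w i assume "w permutes {1..n} \<and> 1 \<le> i \<and> i < n"
  then show "divdiff i (schubert_rec n w) =
      (if inv_length n (w \<circ> transpose i (i + 1)) + 1 = inv_length n w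
       then schubert_rec n (w \<circ> transpose i (i + 1)) else 0)"
    using permutes_ascent_or_descent[of w n i] schubert_rec_ascent[of w n i]
      schubert_rec_descent[of w n i] inv_length_ascent[of w i n] inv_length_descent[of w i n]
    by auto
qed (rule schubert_rec_longest)

lemma is_schubert_family_unique:
  assumes S: "is_schubert_family n S" and S0: "\<And>v. \<not> v permutes {1..n} \<Longrightarrow> S v = 0"
  shows "S = schubert_rec n"
proof
  fix w
  show "S w = schubert_rec n w"
  proof (cases "w permutes {1..n}")
    case True
    then show ?thesis
    proof (induction rule: permutes_ascent_induct)
      case longest
      then show ?case
        using S by (simp add: is_schubert_family_def schubert_rec_longest)
    next
      case (ascent w i)
      let ?v = "w \<circ> transpose i (Suc i)"
      have "?v permutes {1..n}" "descent ?v i" "?v \<circ> transpose i (Suc i) = w"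
        using ascent.hyps permutes_comp_transpose[of w n i] by (auto simp: ascent_def descent_def)
      then have "S w = divdiff i (S ?v)"
        using is_schubert_familyD[OF S, of ?v i] ascent.hyps by simp
      then show ?case
        using ascent schubert_rec_ascent[of w n i] by (simp add: comp_def)
    qed
  qed (simp add: S0 schubert_rec_not_permutes)
qed

lemma schubert_eq_schubert_rec: "schubert n = schubert_rec n"
  unfolding schubert_def
  by (rule the1_equality)
    (use is_schubert_family_schubert_rec schubert_rec_not_permutes is_schubert_family_unique in blast)+

lemma schubert_longest: "schubert n (longest n) = staircase n"
  by (simp add: schubert_eq_schubert_rec schubert_rec_longest)

lemma schubert_ascent:
  "w permutes {1..n} \<Longrightarrow> 1 \<le> i \<Longrightarrow> i < n \<Longrightarrow> ascent w i \<Longrightarrow>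
    schubert n w = divdiff i (schubert n (w \<circ> transpose i (Suc i)))"
  by (simp add: schubert_eq_schubert_rec schubert_rec_ascent)

lemma schubert_descent:
  "w permutes {1..n} \<Longrightarrow> 1 \<le> i \<Longrightarrow> i < n \<Longrightarrow> descent w i \<Longrightarrow>
    divdiff i (schubert n w) = schubert n (w \<circ> transpose i (Suc i))"
  by (simp add: schubert_eq_schubert_rec schubert_rec_descent)

lemma divdiff_schubert_ascent:
  "w permutes {1..n} \<Longrightarrow> 1 \<le> i \<Longrightarrow> i < n \<Longrightarrow> ascent w i \<Longrightarrow> divdiff i (schubert n w) = 0"
  by (simp add: schubert_ascent)

section \<open>Degree bounds\<close>

definition exponents_le :: "(nat \<Rightarrow> nat) \<Rightarrow> mpoly \<Rightarrow> bool" where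
  "exponents_le \<beta> f \<longleftrightarrow> (\<forall>m \<in> Poly_Mapping.keys f. \<forall>k. Poly_Mapping.lookup m k \<le> \<beta> k)"

lemma exponents_le_0 [simp]: "exponents_le \<beta> 0"
  unfolding exponents_le_def by simp

lemma exponents_le_add: "exponents_le \<beta> f \<Longrightarrow> exponents_le \<beta> g \<Longrightarrow> exponents_le \<beta> (f + g)"
  unfolding exponents_le_def by (metis add.right_neutral in_keys_iff lookup_add)

lemma exponents_le_diff: "exponents_le \<beta> f \<Longrightarrow> exponents_le \<beta> g \<Longrightarrow> exponents_le \<beta> (f - g)"
  unfolding exponents_le_def by (metis diff_zero in_keys_iff lookup_minus)

lemma exponents_le_uminus [simp]: "exponents_le \<beta> (- f) \<longleftrightarrow> exponents_le \<beta> f"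
  unfolding exponents_le_def by simp

lemma exponents_le_mono: "exponents_le \<beta> f \<Longrightarrow> (\<And>k. \<beta> k \<le> \<beta>' k) \<Longrightarrow> exponents_le \<beta>' f"
  unfolding exponents_le_def using order_trans by blast

lemma exponents_le_mult:
  "exponents_le \<beta> f \<Longrightarrow> exponents_le \<beta>' g \<Longrightarrow> exponents_le (\<lambda>k. \<beta> k + \<beta>' k) (f * g)"
  unfolding exponents_le_def by (fastforce simp: lookup_add add_mono dest: keys_mult[THEN subsetD])

lemma exponents_le_mon: "(\<And>k. Poly_Mapping.lookup m k \<le> \<beta> k) \<Longrightarrow> exponents_le \<beta> (mon m)"
  unfolding exponents_le_def mon_def by simp

lemma exponents_le_divdiff_binomial_le:
  assumes "b \<le> a"
  shows "exponents_le (\<lambda>k. if k = i \<or> k = Suc i then a - 1 else 0)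
    (divdiff i (var i ^ a * var (Suc i) ^ b))"
  using assms
proof (induction a arbitrary: b)
  case (Suc a)
  show ?case
  proof (cases "b = Suc a")
    case True
    then show ?thesis
      by (simp add: divdiff_symmetric mult.commute)
  next
    case False
    define Y where "Y = var i ^ a * var (Suc i) ^ b"
    have "divdiff i (var i ^ Suc a * var (Suc i) ^ b) = Y + var (Suc i) * divdiff i Y"
      unfolding Y_def by (simp add: divdiff_mult mult.assoc)
    moreover have "exponents_le (\<lambda>k. if k = i \<or> k = Suc i then a else 0) Y"
      using Suc.prems False unfolding Y_def var_power mon_add[symmetric]
      by (intro exponents_le_mon) (auto simp: lookup_add lookup_single)
    moreover have "exponents_le (\<lambda>k. if k = i \<or> k = Suc i then a else 0) (var (Suc i) * divdiff i Y)"
    proof (cases a)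
      case 0
      with Suc.prems False have "b = 0"
        by linarith
      with 0 show ?thesis
        unfolding Y_def by simp
    next
      case (Suc a')
      show ?thesis
      proof (rule exponents_le_mono)
        show "exponents_le (\<lambda>k. Poly_Mapping.lookup (Poly_Mapping.single (Suc i) 1) k +
            (if k = i \<or> k = Suc i then a - 1 else 0)) (var (Suc i) * divdiff i Y)"
          using Suc.IH[of b] Suc.prems False unfolding Y_def var_def
          by (intro exponents_le_mult exponents_le_mon) simp_all
        show "Poly_Mapping.lookup (Poly_Mapping.single (Suc i) 1) k +
            (if k = i \<or> k = Suc i then a - 1 else 0) \<le> (if k = i \<or> k = Suc i then a else 0)" for k
          using Suc by (auto simp: lookup_single)
      qed
    qed
    ultimately show ?thesis
      by (simp only: diff_Suc_1 exponents_le_add)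
  qed
qed simp

lemma exponents_le_divdiff_binomial:
  "exponents_le (\<lambda>k. if k = i \<or> k = Suc i then max a b - 1 else 0)
    (divdiff i (var i ^ a * var (Suc i) ^ b))"
proof (cases "b \<le> a")
  case True
  moreover have "max a b = a"
    using True by simp
  ultimately show ?thesis
    using exponents_le_divdiff_binomial_le[OF True] by (simp only:)
next
  case False
  have "divdiff i (var i ^ a * var (Suc i) ^ b) = - divdiff i (var i ^ b * var (Suc i) ^ a)"
    using divdiff_swap_vars[of i "var i ^ b * var (Suc i) ^ a"] by (simp add: mult.commute)
  moreover have "max a b = b"
    using False by simp
  ultimately show ?thesis
    using exponents_le_divdiff_binomial_le[of a b] False by (simp only: exponents_le_uminus)
qed

lemma exponents_le_divdiff_mon:
  assumes m: "\<And>k. Poly_Mapping.lookup m k \<le> \<beta> k"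
    and \<beta>: "\<beta> (Suc i) \<le> \<beta> i" "\<beta> i \<le> Suc (\<beta> (Suc i))"
  shows "exponents_le \<beta> (divdiff i (mon m))"
proof -
  define a b where "a = Poly_Mapping.lookup m i" and "b = Poly_Mapping.lookup m (Suc i)"
  define m' where "m' = m - Poly_Mapping.single i a - Poly_Mapping.single (Suc i) b"
  have lookup_m': "Poly_Mapping.lookup m' k = (if k = i \<or> k = Suc i then 0 else Poly_Mapping.lookup m k)" for k
    unfolding m'_def a_def b_def by (auto simp: lookup_minus lookup_single)
  have "m = m' + Poly_Mapping.single i a + Poly_Mapping.single (Suc i) b"
    by (rule poly_mapping_eqI) (auto simp: lookup_add lookup_m' lookup_single a_def b_def)
  then have "mon m = mon m' * (var i ^ a * var (Suc i) ^ b)"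
    by (simp add: var_power mon_add mult.assoc)
  moreover have "rename_mon (transpose i (Suc i)) m' = m'"
    by (rule poly_mapping_eqI) (simp add: lookup_rename_mon inj_transpose lookup_m' transpose_def)
  ultimately have "divdiff i (mon m) = mon m' * divdiff i (var i ^ a * var (Suc i) ^ b)"
    by (simp add: divdiff_mult_symmetric swap_vars_mon)
  moreover have "exponents_le (\<lambda>k. Poly_Mapping.lookup m' k +
      (if k = i \<or> k = Suc i then max a b - 1 else 0)) (mon m' * divdiff i (var i ^ a * var (Suc i) ^ b))"
    by (intro exponents_le_mult exponents_le_mon exponents_le_divdiff_binomial) simp
  moreover have "Poly_Mapping.lookup m' k + (if k = i \<or> k = Suc i then max a b - 1 else 0) \<le> \<beta> k" for k
    using m[of k] m[of i] m[of "Suc i"] \<beta> unfolding a_def b_def by (auto simp: lookup_m')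
  ultimately show ?thesis
    by (simp add: exponents_le_mono)
qed

lemma exponents_le_divdiff:
  assumes "exponents_le \<beta> f" "\<beta> (Suc i) \<le> \<beta> i" "\<beta> i \<le> Suc (\<beta> (Suc i))"
  shows "exponents_le \<beta> (divdiff i f)"
proof -
  have "Poly_Mapping.keys f \<subseteq> {m. \<forall>k. Poly_Mapping.lookup m k \<le> \<beta> k}"
    using assms(1) unfolding exponents_le_def by auto
  then show ?thesis
  proof (induction f rule: frag_induction)
    case (one m)
    then show ?case
      using exponents_le_divdiff_mon[of m \<beta> i] assms(2,3) by (simp add: mon_def)
  qed (simp_all add: exponents_le_diff)
qed

lemma swap_vars_eq_if_exponents_le:
  assumes f: "exponents_le \<beta> f" and \<beta>: "\<beta> i = 0" "\<beta> (Suc i) = 0"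
  shows "swap_vars i f = f"
proof (rule poly_mapping_eqI)
  fix m
  let ?s = "rename_mon (transpose i (Suc i))"
  show "Poly_Mapping.lookup (swap_vars i f) m = Poly_Mapping.lookup f m"
  proof (cases "Poly_Mapping.lookup m i = 0 \<and> Poly_Mapping.lookup m (Suc i) = 0")
    case True
    then have "?s m = m"
      by (intro poly_mapping_eqI) (auto simp: lookup_rename_mon inj_transpose transpose_def)
    then show ?thesis
      by (simp add: swap_vars_eq_rename_vars lookup_rename_vars)
  next
    case False
    have vanish: "Poly_Mapping.lookup m' i = 0 \<and> Poly_Mapping.lookup m' (Suc i) = 0"
      if "m' \<in> Poly_Mapping.keys f" for m'
      using f \<beta> that unfolding exponents_le_def by (metis le_zero_eq)
    have "Poly_Mapping.lookup (?s m) i = Poly_Mapping.lookup m (Suc i)"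
      "Poly_Mapping.lookup (?s m) (Suc i) = Poly_Mapping.lookup m i"
      by (simp_all add: lookup_rename_mon inj_transpose)
    then have "m \<notin> Poly_Mapping.keys f" "?s m \<notin> Poly_Mapping.keys f"
      using False vanish by metis+
    then show ?thesis
      by (simp add: swap_vars_eq_rename_vars lookup_rename_vars in_keys_iff)
  qed
qed

definition staircase_exp :: "nat \<Rightarrow> nat \<Rightarrow>\<^sub>0 nat" where
  "staircase_exp n = (\<Sum>k\<in>{1..n}. Poly_Mapping.single k (n - k))"

lemma staircase_eq_mon: "staircase n = mon (staircase_exp n)"
  unfolding staircase_def staircase_exp_def by (simp add: var_power prod_mon)

lemma lookup_staircase_exp:
  "Poly_Mapping.lookup (staircase_exp n) k = (if 1 \<le> k \<and> k \<le> n then n - k else 0)"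
  unfolding staircase_exp_def lookup_sum by (simp add: lookup_single when_def)

lemma exponents_le_schubert:
  assumes "w permutes {1..n}"
  shows "exponents_le (\<lambda>k. n - k) (schubert n w)"
  using assms
proof (induction rule: permutes_ascent_induct)
  case longest
  show ?case
    unfolding schubert_longest staircase_eq_mon by (rule exponents_le_mon) (simp add: lookup_staircase_exp)
next
  case (ascent w i)
  then show ?case
    using exponents_le_divdiff[of "\<lambda>k. n - k" _ i] by (simp add: schubert_ascent comp_def)
qed

lemma swap_vars_schubert_last: "w permutes {1..n} \<Longrightarrow> swap_vars n (schubert n w) = schubert n w"
  by (rule swap_vars_eq_if_exponents_le[OF exponents_le_schubert]) simp_all

section \<open>Schubert polynomials do not vanish\<close>

lemma divdiff_mon_add_var:
  assumes "Poly_Mapping.lookup m i = Poly_Mapping.lookup m (Suc i)"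
  shows "divdiff i (mon (m + Poly_Mapping.single i 1)) = mon m"
proof -
  have "rename_mon (transpose i (Suc i)) m = m"
    using assms by (intro poly_mapping_eqI) (auto simp: lookup_rename_mon inj_transpose transpose_def)
  moreover have "mon (m + Poly_Mapping.single i 1) = mon m * var i"
    by (simp add: mon_add var_def)
  ultimately show ?thesis
    by (simp add: divdiff_mult_symmetric swap_vars_mon)
qed

text \<open>walk_exp m k is the exponent vector of the monomial obtained from x^\<delta>, with
  \<delta> = (m-1, m-2, ..., 1, 0), by applying the divided differences for 1, 2, ..., k in turn.\<close>

definition walk_exp :: "nat \<Rightarrow> nat \<Rightarrow> nat \<Rightarrow>\<^sub>0 nat" where
  "walk_exp m k = staircase_exp m - (\<Sum>j\<in>{1..k}. Poly_Mapping.single j 1)"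

lemma lookup_walk_exp:
  "Poly_Mapping.lookup (walk_exp m k) j =
    (if 1 \<le> j \<and> j \<le> m then m - j - (if j \<le> k then 1 else 0) else 0)"
  unfolding walk_exp_def by (simp add: lookup_minus lookup_sum lookup_single lookup_staircase_exp when_def)

lemma schubert_walk_step:
  assumes w: "w permutes {1..n}" and i: "1 \<le> i" "i < n"
    and S: "schubert n w = mon (m + Poly_Mapping.single i 1)"
    and m: "Poly_Mapping.lookup m i = Poly_Mapping.lookup m (Suc i)"
  shows "w \<circ> transpose i (Suc i) permutes {1..n}" "schubert n (w \<circ> transpose i (Suc i)) = mon m"
    and "Suc (inv_length n (w \<circ> transpose i (Suc i))) = inv_length n w"
proof -
  have "divdiff i (schubert n w) = mon m"
    unfolding S using m by (rule divdiff_mon_add_var)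
  then have "descent w i"
    using divdiff_schubert_ascent[OF w i] permutes_ascent_or_descent[OF w, of i] by auto
  then show "w \<circ> transpose i (Suc i) permutes {1..n}" "schubert n (w \<circ> transpose i (Suc i)) = mon m"
    and "Suc (inv_length n (w \<circ> transpose i (Suc i))) = inv_length n w"
    using permutes_comp_transpose[OF w i] schubert_descent[OF w i] inv_length_descent[OF _ i]
      \<open>divdiff i (schubert n w) = mon m\<close> by simp_all
qed

lemma schubert_walk_row:
  assumes "m \<le> n" "u permutes {1..n}" "schubert n u = mon (staircase_exp m)" "k < m"
  shows "\<exists>v. v permutes {1..n} \<and> schubert n v = mon (walk_exp m k) \<and> inv_length n v + k = inv_length n u"
  using assms(4)
proof (induction k)
  case 0
  have "walk_exp m 0 = staircase_exp m"
    by (simp add: walk_exp_def)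
  then show ?case
    using assms(2,3) by auto
next
  case (Suc k)
  then obtain v where v: "v permutes {1..n}" "schubert n v = mon (walk_exp m k)"
    "inv_length n v + k = inv_length n u"
    by auto
  have "walk_exp m k = walk_exp m (Suc k) + Poly_Mapping.single (Suc k) 1"
    using Suc.prems by (intro poly_mapping_eqI) (auto simp: lookup_walk_exp lookup_add lookup_single)
  moreover have "Poly_Mapping.lookup (walk_exp m (Suc k)) (Suc k) =
      Poly_Mapping.lookup (walk_exp m (Suc k)) (Suc (Suc k))"
    using Suc.prems by (simp add: lookup_walk_exp)
  ultimately show ?case
    using schubert_walk_step[OF v(1), of "Suc k" "walk_exp m (Suc k)"] v(2,3) Suc.prems assms(1)
    by (intro exI[of _ "v \<circ> transpose (Suc k) (Suc (Suc k))"]) (simp add: comp_def)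
qed

lemma schubert_staircase_exp:
  "m \<le> n \<Longrightarrow> \<exists>u. u permutes {1..n} \<and> schubert n u = mon (staircase_exp m) \<and> inv_length n u = (\<Sum>j<m. j)"
proof (induction "n - m" arbitrary: m)
  case 0
  then have "m = n"
    by simp
  then show ?case
    using longest_permutes schubert_longest inv_length_longest by (metis staircase_eq_mon)
next
  case (Suc d)
  then have "d = n - Suc m" and m: "Suc m \<le> n"
    by arith+
  then obtain u where u: "u permutes {1..n}" "schubert n u = mon (staircase_exp (Suc m))"
    "inv_length n u = (\<Sum>j<Suc m. j)"
    using Suc.hyps(1) by blast
  have "walk_exp (Suc m) m = staircase_exp m"
    by (rule poly_mapping_eqI) (simp add: lookup_walk_exp lookup_staircase_exp)
  then show ?case
    using schubert_walk_row[OF m u(1,2), of m] u(3) by auto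
qed

lemma schubert_id: "schubert n id = 1"
proof -
  obtain u where "u permutes {1..n}" "schubert n u = mon (staircase_exp 0)" "inv_length n u = 0"
    using schubert_staircase_exp[of 0 n] by auto
  then show ?thesis
    using inv_length_eq_0_imp_id by (auto simp: staircase_exp_def)
qed

lemma schubert_nonzero: "w permutes {1..n} \<Longrightarrow> schubert n w \<noteq> 0"
proof (induction rule: permutes_descent_induct)
  case id
  show ?case
    using schubert_id by (simp add: id_def)
next
  case (descent w i)
  then show ?case
    using schubert_descent[of w n i] by (auto simp: comp_def)
qed

lemma divdiff_schubert_eq_0_iff:
  assumes "w permutes {1..n}" "1 \<le> i" "i < n"
  shows "divdiff i (schubert n w) = 0 \<longleftrightarrow> ascent w i"
proof (cases "ascent w i")
  case False
  then have "descent w i"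
    using permutes_ascent_or_descent[OF assms(1)] by blast
  then show ?thesis
    using False schubert_descent[OF assms] schubert_nonzero[OF permutes_comp_transpose[OF assms]]
    by simp
qed (simp add: divdiff_schubert_ascent[OF assms])

section \<open>Elementary and complete homogeneous symmetric polynomials\<close>

definition coeff_sum :: "mpoly \<Rightarrow> int" where
  "coeff_sum f = Sum_any (Poly_Mapping.lookup f)"

lemma coeff_sum_add: "coeff_sum (f + g) = coeff_sum f + coeff_sum g"
  unfolding coeff_sum_def lookup_add by (rule Sum_any.distrib) simp_all

lemma coeff_sum_0 [simp]: "coeff_sum 0 = 0"
  by (simp add: coeff_sum_def)

lemma coeff_sum_sum: "coeff_sum (sum F A) = (\<Sum>a\<in>A. coeff_sum (F a))"
  by (induction A rule: infinite_finite_induct) (simp_all add: coeff_sum_add)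

lemma coeff_sum_mon [simp]: "coeff_sum (mon m) = 1"
proof -
  have "{m'. Poly_Mapping.lookup (mon m) m' \<noteq> 0} = {m}"
    unfolding mon_def by (auto simp: lookup_single when_def)
  then show ?thesis
    unfolding coeff_sum_def Sum_any.expand_set by (simp add: mon_def)
qed

lemma transpose_adjacent_in_interval_iff:
  "1 \<le> a \<Longrightarrow> a \<noteq> i \<Longrightarrow> transpose a (Suc a) k \<in> {1..i} \<longleftrightarrow> k \<in> {1..i}"
  by (auto simp: transpose_def)

lemma elem_eq_sum_mon:
  "elem i j = (\<Sum>S | S \<subseteq> {1..i} \<and> card S = j. mon (\<Sum>k\<in>S. Poly_Mapping.single k 1))"
  unfolding elem_def var_def by (simp add: prod_mon)

lemma finite_subsets_card: "finite A \<Longrightarrow> finite {S. S \<subseteq> A \<and> card S = j}"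
  by (rule finite_subset[of _ "Pow A"]) auto

lemma elem_0 [simp]: "elem i 0 = 1"
proof -
  have "{S. S \<subseteq> {1..i} \<and> card S = 0} = {{}}"
    using finite_subset[of _ "{1..i}"] by fastforce
  then show ?thesis
    unfolding elem_def by simp
qed

lemma elem_nonzero: "j \<le> i \<Longrightarrow> elem i j \<noteq> 0"
proof -
  assume "j \<le> i"
  then have "{1..j} \<in> {S. S \<subseteq> {1..i} \<and> card S = j}"
    by auto
  then have "card {S. S \<subseteq> {1..i} \<and> card S = j} \<noteq> 0"
    using finite_subsets_card[of "{1..i}" j] card_0_eq by blast
  then have "coeff_sum (elem i j) \<noteq> 0"
    unfolding elem_eq_sum_mon coeff_sum_sum by simp
  then show ?thesis
    by (metis coeff_sum_0)
qed

lemma rename_vars_elem: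
  assumes \<sigma>: "involution \<sigma>" and A: "\<And>k. \<sigma> k \<in> {1..i} \<longleftrightarrow> k \<in> {1..i}"
  shows "rename_vars \<sigma> (elem i j) = elem i j"
proof -
  have inj: "inj \<sigma>"
    using \<sigma> by (rule involution_inj)
  have \<sigma>\<sigma>: "\<sigma> ` \<sigma> ` S = S" for S
    using \<sigma> by (auto simp: involution_def image_image)
  have mem: "\<sigma> ` S \<subseteq> {1..i} \<and> card (\<sigma> ` S) = j" if "S \<subseteq> {1..i} \<and> card S = j" for S
    using that A inj by (auto simp: card_image inj_on_subset)
  have "rename_vars \<sigma> (elem i j) = (\<Sum>S | S \<subseteq> {1..i} \<and> card S = j. \<Prod>k\<in>\<sigma> ` S. var k)"
    unfolding elem_def using \<sigma> inj
    by (simp add: rename_vars_sum rename_vars_prod prod.reindex inj_on_subset)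
  also have "\<dots> = elem i j"
    unfolding elem_def by (rule sum.reindex_bij_witness[of _ "image \<sigma>" "image \<sigma>"]) (use \<sigma>\<sigma> mem in auto)
  finally show ?thesis .
qed

lemma swap_vars_elem:
  assumes "1 \<le> a" "a \<noteq> i"
  shows "swap_vars a (elem i j) = elem i j"
  unfolding swap_vars_eq_rename_vars
  by (rule rename_vars_elem) (simp_all only: transpose_adjacent_in_interval_iff[OF assms] involution_transpose)

lemma subsets_insert_card_Suc:
  assumes "finite A" "x \<notin> A"
  shows "{S. S \<subseteq> insert x A \<and> card S = Suc k} =
    {S. S \<subseteq> A \<and> card S = Suc k} \<union> insert x ` {S. S \<subseteq> A \<and> card S = k}"
proof (intro set_eqI iffI)
  fix S assume S: "S \<in> {S. S \<subseteq> insert x A \<and> card S = Suc k}"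
  show "S \<in> {S. S \<subseteq> A \<and> card S = Suc k} \<union> insert x ` {S. S \<subseteq> A \<and> card S = k}"
  proof (cases "x \<in> S")
    case True
    then have "S = insert x (S - {x})" "S - {x} \<in> {S. S \<subseteq> A \<and> card S = k}"
      using S assms by (auto dest: finite_subset)
    then show ?thesis
      by blast
  qed (use S in auto)
next
  fix S assume "S \<in> {S. S \<subseteq> A \<and> card S = Suc k} \<union> insert x ` {S. S \<subseteq> A \<and> card S = k}"
  moreover have "card (insert x T) = Suc (card T)" if "T \<subseteq> A" for T
  proof -
    have "x \<notin> T"
      using that assms(2) by auto
    then show ?thesis
      using finite_subset[OF that assms(1)] by simp
  qed
  ultimately show "S \<in> {S. S \<subseteq> insert x A \<and> card S = Suc k}"
    by auto
qed

lemma elem_Suc_Suc: "elem (Suc i) (Suc k) = elem i (Suc k) + var (Suc i) * elem i k"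
proof -
  let ?P = "\<lambda>k. {S. S \<subseteq> {1..i} \<and> card S = k}"
  have split: "{S. S \<subseteq> {1..Suc i} \<and> card S = Suc k} = ?P (Suc k) \<union> insert (Suc i) ` ?P k"
    using subsets_insert_card_Suc[of "{1..i}" "Suc i" k] by (simp add: atLeastAtMostSuc_conv)
  have "Suc i \<notin> S" if "S \<in> ?P k" for S
    using that by auto
  then have inj: "inj_on (insert (Suc i)) (?P k)"
    by (intro inj_onI) (metis Diff_insert_absorb)
  have "(\<Prod>l\<in>insert (Suc i) S. var l) = var (Suc i) * (\<Prod>l\<in>S. var l)" if "S \<in> ?P k" for S
    using that finite_subset[of S "{1..i}"] by (subst prod.insert) auto
  then have "(\<Sum>S\<in>insert (Suc i) ` ?P k. \<Prod>l\<in>S. var l) = (\<Sum>S\<in>?P k. var (Suc i) * (\<Prod>l\<in>S. var l))"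
    unfolding sum.reindex[OF inj] comp_def by (rule sum.cong[OF refl])
  then show ?thesis
    unfolding elem_def split
    by (subst sum.union_disjoint) (auto simp: finite_subsets_card sum_distrib_left)
qed

lemma divdiff_elem: "divdiff (Suc i) (elem (Suc i) (Suc k)) = elem i k"
proof -
  have "swap_vars (Suc i) (elem i j) = elem i j" for j
    by (simp add: swap_vars_elem)
  then show ?thesis
    unfolding elem_Suc_Suc by (simp add: divdiff_symmetric divdiff_mult_symmetric mult.commute)
qed

definition deg_monomials :: "nat \<Rightarrow> nat \<Rightarrow> (nat \<Rightarrow>\<^sub>0 nat) set" where
  "deg_monomials i j =
    {m. Poly_Mapping.keys m \<subseteq> {1..i} \<and> (\<Sum>k\<in>{1..i}. Poly_Mapping.lookup m k) = j}"

lemma chom_eq_sum_mon: "chom i j = (\<Sum>m\<in>deg_monomials i j. mon m)"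
  unfolding chom_def deg_monomials_def ..

lemma lookup_le_deg_monomials: "m \<in> deg_monomials i j \<Longrightarrow> Poly_Mapping.lookup m k \<le> j"
proof (cases "k \<in> {1..i}")
  case True
  assume "m \<in> deg_monomials i j"
  then show ?thesis
    using member_le_sum[OF True, of "Poly_Mapping.lookup m"] by (simp add: deg_monomials_def)
next
  case False
  assume "m \<in> deg_monomials i j"
  then have "k \<notin> Poly_Mapping.keys m"
    using False by (auto simp: deg_monomials_def)
  then show ?thesis
    by (simp add: in_keys_iff)
qed

lemma finite_deg_monomials: "finite (deg_monomials i j)"
proof -
  let ?f = "\<lambda>m. restrict (Poly_Mapping.lookup m) {1..i}"
  have "inj_on ?f (deg_monomials i j)"
  proof (rule inj_onI)
    fix m m' assume m: "m \<in> deg_monomials i j" "m' \<in> deg_monomials i j" and "?f m = ?f m'"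
    show "m = m'"
    proof (rule poly_mapping_eqI)
      fix k
      show "Poly_Mapping.lookup m k = Poly_Mapping.lookup m' k"
      proof (cases "k \<in> {1..i}")
        case True
        then show ?thesis
          using fun_cong[OF \<open>?f m = ?f m'\<close>, of k] by simp
      next
        case False
        then have "k \<notin> Poly_Mapping.keys m" "k \<notin> Poly_Mapping.keys m'"
          using m by (auto simp: deg_monomials_def)
        then show ?thesis
          by (simp add: in_keys_iff)
      qed
    qed
  qed
  moreover have "?f ` deg_monomials i j \<subseteq> PiE {1..i} (\<lambda>_. {0..j})"
    using lookup_le_deg_monomials by auto
  then have "finite (?f ` deg_monomials i j)"
    by (rule finite_subset) (simp add: finite_PiE)
  ultimately show ?thesis
    by (rule finite_imageD[rotated])
qed

lemma chom_0 [simp]: "chom i 0 = 1"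
proof -
  have "deg_monomials i 0 = {0}"
    using lookup_le_deg_monomials[of _ i 0]
    by (auto intro: poly_mapping_eqI simp: deg_monomials_def)
  then show ?thesis
    unfolding chom_eq_sum_mon by simp
qed

lemma chom_nonzero: "1 \<le> i \<Longrightarrow> chom i j \<noteq> 0"
proof -
  assume "1 \<le> i"
  then have "Poly_Mapping.single 1 j \<in> deg_monomials i j"
    by (simp add: deg_monomials_def lookup_single when_def)
  then have "coeff_sum (chom i j) \<noteq> 0"
    unfolding chom_eq_sum_mon coeff_sum_sum using finite_deg_monomials[of i j] by auto
  then show ?thesis
    by (metis coeff_sum_0)
qed

lemma rename_vars_chom:
  assumes \<sigma>: "involution \<sigma>" and A: "\<And>k. \<sigma> k \<in> {1..i} \<longleftrightarrow> k \<in> {1..i}"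
  shows "rename_vars \<sigma> (chom i j) = chom i j"
proof -
  have inj: "inj \<sigma>"
    using \<sigma> by (rule involution_inj)
  have "\<sigma> ` {1..i} = {1..i}"
  proof
    show "{1..i} \<subseteq> \<sigma> ` {1..i}"
    proof
      fix k assume "k \<in> {1..i}"
      then have "\<sigma> k \<in> {1..i}"
        using A by blast
      moreover have "k = \<sigma> (\<sigma> k)"
        using \<sigma> by (simp add: involution_def)
      ultimately show "k \<in> \<sigma> ` {1..i}"
        by blast
    qed
  qed (use A in blast)
  then have "(\<Sum>k\<in>{1..i}. Poly_Mapping.lookup m (\<sigma> k)) = (\<Sum>k\<in>{1..i}. Poly_Mapping.lookup m k)" for m
    using sum.reindex[OF inj_on_subset[OF inj], of "{1..i}" "Poly_Mapping.lookup m"] by simp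
  moreover have "Poly_Mapping.keys (rename_mon \<sigma> m) \<subseteq> {1..i}" if "Poly_Mapping.keys m \<subseteq> {1..i}" for m
  proof
    fix k assume "k \<in> Poly_Mapping.keys (rename_mon \<sigma> m)"
    then have "\<sigma> k \<in> Poly_Mapping.keys m"
      by (simp add: in_keys_iff lookup_rename_mon inj)
    then show "k \<in> {1..i}"
      using that A by blast
  qed
  ultimately have mem: "rename_mon \<sigma> m \<in> deg_monomials i j" if "m \<in> deg_monomials i j" for m
    using that by (auto simp: deg_monomials_def lookup_rename_mon inj)
  have "rename_vars \<sigma> (chom i j) = (\<Sum>m\<in>deg_monomials i j. mon (rename_mon \<sigma> m))"
    unfolding chom_eq_sum_mon using \<sigma> by (simp add: rename_vars_sum)
  also have "\<dots> = chom i j"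
    unfolding chom_eq_sum_mon
    by (rule sum.reindex_bij_witness[of _ "rename_mon \<sigma>" "rename_mon \<sigma>"]) (simp_all add: \<sigma> mem)
  finally show ?thesis .
qed

lemma swap_vars_chom:
  assumes "1 \<le> a" "a \<noteq> i"
  shows "swap_vars a (chom i j) = chom i j"
  unfolding swap_vars_eq_rename_vars
  by (rule rename_vars_chom) (simp_all only: transpose_adjacent_in_interval_iff[OF assms] involution_transpose)

lemma deg_monomials_eq_Suc:
  "deg_monomials i j = {m \<in> deg_monomials (Suc i) j. Poly_Mapping.lookup m (Suc i) = 0}"
proof (intro set_eqI iffI)
  fix m assume "m \<in> deg_monomials i j"
  moreover from this have "Poly_Mapping.lookup m (Suc i) = 0"
    by (auto simp: deg_monomials_def in_keys_iff)
  ultimately show "m \<in> {m \<in> deg_monomials (Suc i) j. Poly_Mapping.lookup m (Suc i) = 0}"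
    by (auto simp: deg_monomials_def)
next
  fix m assume m: "m \<in> {m \<in> deg_monomials (Suc i) j. Poly_Mapping.lookup m (Suc i) = 0}"
  have "Poly_Mapping.keys m \<subseteq> {1..i}"
  proof
    fix x assume x: "x \<in> Poly_Mapping.keys m"
    then have "x \<noteq> Suc i"
      using m by (auto simp: in_keys_iff)
    moreover have "x \<in> {1..Suc i}"
      using m x by (auto simp: deg_monomials_def)
    ultimately show "x \<in> {1..i}"
      by auto
  qed
  then show "m \<in> deg_monomials i j"
    using m by (simp add: deg_monomials_def)
qed

lemma add_var_mem_deg_monomials_iff:
  "m + Poly_Mapping.single (Suc i) 1 \<in> deg_monomials (Suc i) (Suc k) \<longleftrightarrow> m \<in> deg_monomials (Suc i) k"
proof -
  have "Poly_Mapping.keys (m + Poly_Mapping.single (Suc i) 1) = insert (Suc i) (Poly_Mapping.keys m)"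
    by (auto simp: in_keys_iff lookup_add lookup_single when_def split: if_splits)
  moreover have "(\<Sum>l\<in>{1..Suc i}. Poly_Mapping.lookup (m + Poly_Mapping.single (Suc i) 1) l) =
      Suc (\<Sum>l\<in>{1..Suc i}. Poly_Mapping.lookup m l)"
    by (simp add: lookup_add lookup_single sum.distrib)
  ultimately show ?thesis
    by (simp add: deg_monomials_def)
qed

lemma deg_monomials_Suc_Suc:
  "deg_monomials (Suc i) (Suc k) =
    deg_monomials i (Suc k) \<union> (\<lambda>m. m + Poly_Mapping.single (Suc i) 1) ` deg_monomials (Suc i) k"
  (is "?lhs = ?A \<union> ?shift ` ?B")
proof (intro set_eqI iffI)
  fix m assume m: "m \<in> ?lhs"
  show "m \<in> ?A \<union> ?shift ` ?B"
  proof (cases "Poly_Mapping.lookup m (Suc i) = 0")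
    case False
    then have "m = ?shift (m - Poly_Mapping.single (Suc i) 1)"
      by (intro poly_mapping_eqI) (auto simp: lookup_add lookup_minus lookup_single when_def)
    moreover from this have "m - Poly_Mapping.single (Suc i) 1 \<in> ?B"
      using m add_var_mem_deg_monomials_iff by metis
    ultimately show ?thesis
      by blast
  qed (use m deg_monomials_eq_Suc in blast)
qed (use deg_monomials_eq_Suc add_var_mem_deg_monomials_iff in blast)+

lemma chom_Suc_Suc: "chom (Suc i) (Suc k) = chom i (Suc k) + var (Suc i) * chom (Suc i) k"
proof -
  let ?shift = "\<lambda>m :: nat \<Rightarrow>\<^sub>0 nat. m + Poly_Mapping.single (Suc i) 1"
  have "Poly_Mapping.lookup m (Suc i) = 0" if "m \<in> deg_monomials i (Suc k)" for m
    using that by (auto simp: deg_monomials_def in_keys_iff)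
  moreover have "Poly_Mapping.lookup (?shift m) (Suc i) \<noteq> 0" for m
    by (simp add: lookup_add)
  ultimately have disj: "deg_monomials i (Suc k) \<inter> ?shift ` deg_monomials (Suc i) k = {}"
    by blast
  have "(\<Sum>m\<in>?shift ` deg_monomials (Suc i) k. mon m) = var (Suc i) * chom (Suc i) k"
    by (subst sum.reindex) (auto simp: inj_on_def chom_eq_sum_mon sum_distrib_left mon_add var_def mult.commute)
  then show ?thesis
    unfolding chom_eq_sum_mon deg_monomials_Suc_Suc
      sum.union_disjoint[OF finite_deg_monomials finite_imageI[OF finite_deg_monomials] disj]
    by simp
qed

lemma divdiff_chom: "1 \<le> i \<Longrightarrow> divdiff i (chom i (Suc k)) = chom (Suc i) k"
proof -
  assume "1 \<le> i"
  then have "swap_vars i (chom (Suc i) j) = chom (Suc i) j" for j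
    by (simp add: swap_vars_chom)
  moreover have "chom i (Suc k) = chom (Suc i) (Suc k) - chom (Suc i) k * var (Suc i)"
    by (simp add: chom_Suc_Suc mult.commute)
  ultimately show ?thesis
    by (simp add: divdiff_symmetric divdiff_mult_symmetric)
qed

section \<open>Schubert polynomials that are products of e's or h's\<close>

lemma divdiff_prod_symmetric_factors:
  assumes "finite A" "i \<in> A" "\<And>j. j \<in> A \<Longrightarrow> j \<noteq> i \<Longrightarrow> swap_vars i (F j) = F j"
  shows "divdiff i (\<Prod>j\<in>A. F j) = divdiff i (F i) * (\<Prod>j\<in>A - {i}. F j)"
proof -
  have "swap_vars i (\<Prod>j\<in>A - {i}. F j) = (\<Prod>j\<in>A - {i}. F j)"
    using assms(3) by (simp add: swap_vars_prod)
  then have "divdiff i ((\<Prod>j\<in>A - {i}. F j) * F i) = (\<Prod>j\<in>A - {i}. F j) * divdiff i (F i)"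
    by (rule divdiff_mult_symmetric)
  then show ?thesis
    using prod.remove[OF assms(1,2), of F] by (simp add: mult.commute)
qed

lemma divdiff_prod_eq_0_iff:
  assumes "finite A" "i \<in> A" "\<And>j. j \<in> A \<Longrightarrow> F j \<noteq> 0"
    and "\<And>j. j \<in> A \<Longrightarrow> j \<noteq> i \<Longrightarrow> swap_vars i (F j) = F j"
  shows "divdiff i (\<Prod>j\<in>A. F j) = 0 \<longleftrightarrow> divdiff i (F i) = 0"
  using assms by (simp add: divdiff_prod_symmetric_factors prod_zero_iff)

lemma prod_shift_exponent:
  fixes F :: "nat \<Rightarrow> nat \<Rightarrow> 'a::comm_monoid_mult"
  assumes A: "finite A" "i \<in> A" and k: "k \<noteq> i" and F: "F i 0 = 1" "F k 0 = 1"
    and "k \<in> A \<Longrightarrow> a k = 0" and "k \<notin> A \<Longrightarrow> c = 0"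
  shows "F k c * (\<Prod>j\<in>A - {i}. F j (a j)) = (\<Prod>j\<in>A. F j ((a(i := 0, k := c)) j))"
proof (cases "k \<in> A")
  case True
  have "(\<Prod>j\<in>A - {i} - {k}. F j ((a(i := 0, k := c)) j)) = (\<Prod>j\<in>A - {i} - {k}. F j (a j))"
    by (rule prod.cong) auto
  then have "(\<Prod>j\<in>A. F j ((a(i := 0, k := c)) j)) = F k c * (\<Prod>j\<in>A - {i} - {k}. F j (a j))"
    using A k F True by (simp add: prod.remove[of A i] prod.remove[of "A - {i}" k])
  also have "\<dots> = F k c * (\<Prod>j\<in>A - {i}. F j (a j))"
    using A k F True assms(6) by (simp add: prod.remove[of "A - {i}" k])
  finally show ?thesis ..
next
  case False
  have "(\<Prod>j\<in>A - {i}. F j ((a(i := 0, k := c)) j)) = (\<Prod>j\<in>A - {i}. F j (a j))"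
    using False by (intro prod.cong) auto
  then show ?thesis
    using A k F False assms(7) by (simp add: prod.remove[of A i])
qed

lemma divdiff_elem_eq_0_iff:
  assumes "1 \<le> i" "c \<le> i"
  shows "divdiff i (elem i c) = 0 \<longleftrightarrow> c = 0"
proof (cases c)
  case (Suc c')
  then obtain i' where "i = Suc i'" "c' \<le> i'"
    using assms by (cases i) auto
  then show ?thesis
    using Suc by (simp add: divdiff_elem elem_nonzero)
qed simp

lemma divdiff_chom_eq_0_iff: "1 \<le> i \<Longrightarrow> divdiff i (chom i c) = 0 \<longleftrightarrow> c = 0"
  by (cases c) (simp_all add: divdiff_chom chom_nonzero)

context
  fixes n :: nat and w :: "nat \<Rightarrow> nat" and a :: "nat \<Rightarrow> nat"
  assumes w: "w permutes {1..n}"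
begin

lemma elem_monomial_exponent_eq_0_iff:
  assumes a: "\<forall>k\<in>{1..n}. a k \<le> k" and S: "schubert n w = elem_monomial n a"
    and i: "1 \<le> i" "i < n"
  shows "a i = 0 \<longleftrightarrow> ascent w i"
proof -
  have "divdiff i (schubert n w) = 0 \<longleftrightarrow> divdiff i (elem i (a i)) = 0"
    unfolding S elem_monomial_def using a i
    by (intro divdiff_prod_eq_0_iff) (auto simp: elem_nonzero swap_vars_elem)
  then show ?thesis
    using divdiff_schubert_eq_0_iff[OF w i] divdiff_elem_eq_0_iff[of i "a i"] a i by simp
qed

lemma elem_monomial_descent:
  assumes a: "\<forall>k\<in>{1..n}. a k \<le> k" and S: "schubert n w = elem_monomial n a"
    and i: "1 \<le> i" "i < n" and "descent w i" "ascent w (i - 1)"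
  defines "b \<equiv> a(i := 0, i - 1 := a i - 1)"
  shows "schubert n (w \<circ> transpose i (Suc i)) = elem_monomial n b" and "\<forall>k\<in>{1..n}. b k \<le> k"
proof -
  have "a i \<noteq> 0"
    using elem_monomial_exponent_eq_0_iff[OF a S i] \<open>descent w i\<close> by (simp add: ascent_def descent_def)
  then obtain c where c: "a i = Suc c"
    using not0_implies_Suc by blast
  obtain i' where i': "i = Suc i'"
    using i by (cases i) auto
  have "a i \<le> i"
    using a i by simp
  then have "c \<le> i'"
    using c i' by simp
  have "schubert n (w \<circ> transpose i (Suc i)) = divdiff i (elem i (a i)) * (\<Prod>j\<in>{1..n} - {i}. elem j (a j))"
    unfolding schubert_descent[OF w i \<open>descent w i\<close>, symmetric] S elem_monomial_def using i
    by (intro divdiff_prod_symmetric_factors) (auto simp: swap_vars_elem)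
  also have "\<dots> = elem i' c * (\<Prod>j\<in>{1..n} - {i}. elem j (a j))"
    using c i' by (simp add: divdiff_elem)
  also have "\<dots> = elem_monomial n b"
  proof -
    have b: "b = a(i := 0, i' := c)"
      unfolding b_def using c i' by simp
    have "i' \<in> {1..n} \<Longrightarrow> a i' = 0"
      using elem_monomial_exponent_eq_0_iff[OF a S, of i'] \<open>ascent w (i - 1)\<close> i i' by simp
    moreover have "i' \<notin> {1..n} \<Longrightarrow> c = 0"
      using \<open>c \<le> i'\<close> i i' by simp
    ultimately show ?thesis
      unfolding elem_monomial_def b using i i'
      by (intro prod_shift_exponent) auto
  qed
  finally show "schubert n (w \<circ> transpose i (Suc i)) = elem_monomial n b" .
  show "\<forall>k\<in>{1..n}. b k \<le> k"
    using a \<open>c \<le> i'\<close> c i' unfolding b_def by simp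
qed

lemma chom_monomial_exponent_eq_0_iff:
  assumes S: "schubert n w = chom_monomial n a" and i: "1 \<le> i" "i \<le> n"
  shows "a i = 0 \<longleftrightarrow> divdiff i (schubert n w) = 0"
proof -
  have "divdiff i (schubert n w) = 0 \<longleftrightarrow> divdiff i (chom i (a i)) = 0"
    unfolding S chom_monomial_def using i
    by (intro divdiff_prod_eq_0_iff) (auto simp: chom_nonzero swap_vars_chom)
  then show ?thesis
    using divdiff_chom_eq_0_iff[of i "a i"] i by simp
qed

lemma chom_monomial_descent:
  assumes S: "schubert n w = chom_monomial n a"
    and i: "1 \<le> i" "i < n" and "descent w i" "ascent w (Suc i)"
  defines "b \<equiv> a(i := 0, Suc i := a i - 1)"
  shows "schubert n (w \<circ> transpose i (Suc i)) = chom_monomial n b"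
proof -
  have "a i \<noteq> 0"
    using chom_monomial_exponent_eq_0_iff[OF S, of i] divdiff_schubert_eq_0_iff[OF w i]
      \<open>descent w i\<close> i by (simp add: ascent_def descent_def)
  then obtain c where c: "a i = Suc c"
    using not0_implies_Suc by blast
  have "a (Suc i) = 0"
  proof (cases "Suc i = n")
    case True
    \<comment> \<open>n is not covered by the first claim; the degree bound makes S_w symmetric in x_n, x_(n+1)\<close>
    then show ?thesis
      using chom_monomial_exponent_eq_0_iff[OF S, of n] swap_vars_schubert_last[OF w]
      by (simp add: divdiff_symmetric)
  next
    case False
    then show ?thesis
      using chom_monomial_exponent_eq_0_iff[OF S, of "Suc i"] divdiff_schubert_eq_0_iff[OF w, of "Suc i"]
        \<open>ascent w (Suc i)\<close> i by simp
  qed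
  have "schubert n (w \<circ> transpose i (Suc i)) = divdiff i (chom i (a i)) * (\<Prod>j\<in>{1..n} - {i}. chom j (a j))"
    unfolding schubert_descent[OF w i \<open>descent w i\<close>, symmetric] S chom_monomial_def using i
    by (intro divdiff_prod_symmetric_factors) (auto simp: swap_vars_chom)
  also have "\<dots> = chom (Suc i) c * (\<Prod>j\<in>{1..n} - {i}. chom j (a j))"
    unfolding c using i by (simp add: divdiff_chom)
  also have "\<dots> = chom_monomial n b"
  proof -
    have b: "b = a(i := 0, Suc i := c)"
      unfolding b_def c by simp
    show ?thesis
      unfolding chom_monomial_def b using i \<open>a (Suc i) = 0\<close>
      by (intro prod_shift_exponent) auto
  qed
  finally show ?thesis .
qed

end

theorem lemma6:
  fixes n :: nat and w :: "nat \<Rightarrow> nat"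
  assumes w: "w permutes {1..n}"
  shows
   "(\<forall>a. (\<forall>k\<in>{1..n}. a k \<le> k) \<and> schubert n w = elem_monomial n a \<longrightarrow>
       (\<forall>i. 1 \<le> i \<and> i \<le> n - 1 \<longrightarrow> (a i = 0 \<longleftrightarrow> ascent w i)) \<and>
       (\<forall>i. 1 \<le> i \<and> i \<le> n - 1 \<and> descent w i \<and> ascent w (i - 1) \<longrightarrow>
          divdiff i (schubert n w) = schubert n (w \<circ> transpose i (i+1)) \<and>
          (\<exists>b. (\<forall>k\<in>{1..n}. b k \<le> k) \<and>
               schubert n (w \<circ> transpose i (i+1)) = elem_monomial n b)))
    \<and>
    (\<forall>a. schubert n w = chom_monomial n a \<longrightarrow>
       (\<forall>i. 1 \<le> i \<and> i \<le> n - 1 \<longrightarrow> (a i = 0 \<longleftrightarrow> ascent w i)) \<and>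
       (\<forall>i. 1 \<le> i \<and> i \<le> n - 1 \<and> descent w i \<and> ascent w (i + 1) \<longrightarrow>
          divdiff i (schubert n w) = schubert n (w \<circ> transpose i (i+1)) \<and>
          (\<exists>b. schubert n (w \<circ> transpose i (i+1)) = chom_monomial n b)))"
proof (intro conjI allI impI; elim conjE)
  fix a i
  assume a: "\<forall>k\<in>{1..n}. a k \<le> k" and S: "schubert n w = elem_monomial n a"
  show "a i = 0 \<longleftrightarrow> ascent w i" if "1 \<le> i" "i \<le> n - 1"
    using elem_monomial_exponent_eq_0_iff[OF w a S, of i] that by auto
  show "divdiff i (schubert n w) = schubert n (w \<circ> transpose i (i + 1))"
    and "\<exists>b. (\<forall>k\<in>{1..n}. b k \<le> k) \<and> schubert n (w \<circ> transpose i (i + 1)) = elem_monomial n b"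
    if "1 \<le> i" "i \<le> n - 1" "descent w i" "ascent w (i - 1)"
    using that schubert_descent[OF w, of i] elem_monomial_descent[OF w a S, of i]
    by (auto intro!: exI[of _ "a(i := 0, i - 1 := a i - 1)"])
next
  fix a i
  assume S: "schubert n w = chom_monomial n a"
  show "a i = 0 \<longleftrightarrow> ascent w i" if "1 \<le> i" "i \<le> n - 1"
    using chom_monomial_exponent_eq_0_iff[OF w S, of i] divdiff_schubert_eq_0_iff[OF w, of i] that by auto
  show "divdiff i (schubert n w) = schubert n (w \<circ> transpose i (i + 1))"
    and "\<exists>b. schubert n (w \<circ> transpose i (i + 1)) = chom_monomial n b"
    if "1 \<le> i" "i \<le> n - 1" "descent w i" "ascent w (i + 1)"
    using that schubert_descent[OF w, of i] chom_monomial_descent[OF w S, of i] by auto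
qed

end
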